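(* Let $X$ be a Tychonoff space. Then: (i) the games $G_1(\mathscr N[K(X)],\neg\Omega_X)$, $G_1(\mathscr N_{C_k(X)}(\mathbf 0),\neg\Omega_{C_p(X),\mathbf 0})$ and $G_1(\mathscr T_{C_k(X)},\mathrm{CD}_{C_p(X)})$ are equivalent; (ii) the games $G_1(\mathcal K_X,\Omega_X)$, $G_1(\Omega_{C_k(X),\mathbf 0},\Omega_{C_p(X),\mathbf 0})$ and $G_1(\mathcal D_{C_k(X)},\Omega_{C_p(X),\mathbf 0})$ are equivalent; (iii) each game in (i) is dual to each game in (ii); (iv) $\mathrm{I}\underset{\mathrm{pre}}{\uparrow}G_1(\mathscr T_{C_k(X)},\mathrm{CD}_{C_p(X)})$ iff $X$ is $\sigma$-compact iff $\mathrm{cof}(\mathscr N_{C_k(X)}(\mathbf 0);\mathscr N_{C_p(X)}(\mathbf 0),\supseteq)=\omega$; (v) the games $G_1(\mathscr N[K(X)],\neg\Gamma_X)$ and $G_1(\mathscr N_{C_k(X)}(\mathbf 0),\neg\Gamma_{C_p(X),\mathbf 0})$ are equivalent for player One to $G_1(\mathscr N[K(X)],\neg\Omega_X)$ and $G_1(\mathscr N_{C_k(X)}(\mathbf 0),\neg\Omega_{C_p(X),\mathbf 0})$; (vi) $G_1(\mathcal K_X,\Omega_X)$ and $G_1(\mathcal K_X,\Gamma_X)$ are equivalent for player Two.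
   Context: $K(X)$ is the family of nonempty compact subsets of $X$. $C_p(X)$ ($C_k(X)$) is the set of continuous $f:X\to\mathbb R$ with the topology of pointwise convergence (uniform convergence on compact sets), generated by sets $[f;A,\varepsilon]=\{g:\sup_{x\in A}|f(x)-g(x)|<\varepsilon\}$ with $A$ finite (resp. compact), $\varepsilon>0$; $\mathbf 0$ is the zero function. $\Omega_X$ is the set of $\omega$-covers of $X$: open covers $\mathscr U$ with $X\notin\mathscr U$ such that every finite $F\subseteq X$ lies in some $U\in\mathscr U$. $\mathcal K_X$ is the set of $k$-covers: open covers $\mathscr U$ with $X\notin\mathscr U$ such that every compact $K\subseteq X$ lies in some member. $\Gamma_X$ is the set of $\gamma$-covers: infinite open covers $\mathscr U$ with $X\notin\mathscr U$ such that for every finite $F\subseteq X$, $\{U\in\mathscr U:F\not\subseteq U\}$ is finite. $\mathscr N[K(X)]=\{\mathscr N(K):K\in K(X)\}$ with $\mathscr N(K)$ the set of open $U\neq X$ with $K\subseteq U$. For a space $Y$ and $y\in Y$: $\mathscr N_Y(y)$ = open neighbourhoods of $y$; $\mathscr T_Y$ = nonempty open sets; $\mathcal D_Y$ = dense sets; $\mathrm{CD}_Y$ = closed discrete sets; $\Omega_{Y,y}=\{S\subseteq Y:y\in\mathrm{cl}(S)\}$; $\Gamma_{Y,y}$ = sequences converging to $y$ (Two's selections count as being in $\Gamma_{Y,y}$ iff they converge to $y$). Games: in $G_1(\mathcal E,\mathcal C)$, at each inning $n\in\omega$ One plays $E_n\in\mathcal E$ and Two picks $x_n\in E_n$; Two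 wins iff $\{x_n:n\in\omega\}\in\mathcal C$; $\neg\mathcal C$ is the complement of $\mathcal C$. Strategies for One map finite sequences of Two's moves to moves; predetermined strategies depend only on the inning number. Strategies for Two map finite sequences of One's moves to an element of the last one; Markov strategies depend only on One's last move and the inning number. $\mathrm{I}\uparrow G$, $\mathrm{I}\underset{\mathrm{pre}}{\uparrow}G$, $\mathrm{II}\uparrow G$, $\mathrm{II}\underset{\mathrm{mark}}{\uparrow}G$ denote existence of a winning strategy / winning predetermined strategy for One / winning strategy / winning Markov strategy for Two. $G\le_{\mathrm{II}}H$ means: $\mathrm{II}\underset{\mathrm{mark}}{\uparrow}G\Rightarrow\mathrm{II}\underset{\mathrm{mark}}{\uparrow}H$, $\mathrm{II}\uparrow G\Rightarrow\mathrm{II}\uparrow H$, $\mathrm{I}\not\uparrow G\Rightarrow\mathrm{I}\not\uparrow H$, and $\mathrm{I}\not\underset{\mathrm{pre}}{\uparrow}G\Rightarrow\mathrm{I}\not\underset{\mathrm{pre}}{\uparrow}H$; $G,H$ are equivalent if $G\le_{\mathrm{II}}H$ and $H\le_{\mathrm{II}}G$. $G,H$ are dual if $\mathrm{I}\uparrow G\iff\mathrm{II}\uparrow H$, $\mathrm{I}\uparrow H\iff\mathrm{II}\uparrow G$, $\mathrm{I}\underset{\mathrm{pre}}{\uparrow}G\iff\mathrm{II}\underset{\mathrm{mark}}{\uparrow}H$, and $\mathrm{I}\underset{\mathrm{pre}}{\uparrow}H\iff\mathrm{II}\underset{\mathrm{mark}}{\uparrow}G$. Two games are equivalent for player One if One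 has a winning strategy in one iff in the other, and a winning predetermined strategy in one iff in the other; equivalent for player Two if Two has a winning strategy in one iff in the other, and a winning Markov strategy in one iff in the other. $\mathrm{cof}(\mathcal E;\mathcal F,\le)$ is the least cardinal $\kappa$ such that some $\{E_\alpha:\alpha<\kappa\}\subseteq\mathcal E$ has every $F\in\mathcal F$ satisfying $F\le E_\alpha$ for some $\alpha$; here $\le$ is $\supseteq$ on sets of functions. *)

theory Defs
  imports "HOL-Analysis.Analysis"
begin

text \<open>A game G_1 is given by the collection of One's possible moves and by the
  winning condition for Two on the sequence of Two's selections.\<close>

type_synonym 'b game = "'b set set \<times> ((nat \<Rightarrow> 'b) \<Rightarrow> bool)"

definition G1 :: "'b set set \<Rightarrow> 'b set set \<Rightarrow> 'b game" where
  "G1 E C = (E, \<lambda>x. range x \<in> C)"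

definition G1_neg :: "'b set set \<Rightarrow> 'b set set \<Rightarrow> 'b game" where
  "G1_neg E C = (E, \<lambda>x. range x \<notin> C)"

definition I_wins :: "'b game \<Rightarrow> bool" where
  "I_wins G \<longleftrightarrow> (\<exists>\<sigma> :: 'b list \<Rightarrow> 'b set.
      (\<forall>ls. \<sigma> ls \<in> fst G) \<and>
      (\<forall>x. (\<forall>n. x n \<in> \<sigma> (map x [0..<n])) \<longrightarrow> \<not> snd G x))"

definition I_pre_wins :: "'b game \<Rightarrow> bool" where
  "I_pre_wins G \<longleftrightarrow> (\<exists>Es :: nat \<Rightarrow> 'b set.
      (\<forall>n. Es n \<in> fst G) \<and>
      (\<forall>x. (\<forall>n. x n \<in> Es n) \<longrightarrow> \<not> snd G x))"

definition II_wins :: "'b game \<Rightarrow> bool" where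
  "II_wins G \<longleftrightarrow> (\<exists>\<tau> :: 'b set list \<Rightarrow> 'b.
      (\<forall>ls. ls \<noteq> [] \<and> set ls \<subseteq> fst G \<longrightarrow> \<tau> ls \<in> last ls) \<and>
      (\<forall>Es. (\<forall>n. Es n \<in> fst G) \<longrightarrow> snd G (\<lambda>n. \<tau> (map Es [0..<Suc n]))))"

definition II_mark_wins :: "'b game \<Rightarrow> bool" where
  "II_mark_wins G \<longleftrightarrow> (\<exists>\<tau> :: 'b set \<Rightarrow> nat \<Rightarrow> 'b.
      (\<forall>E n. E \<in> fst G \<longrightarrow> \<tau> E n \<in> E) \<and>
      (\<forall>Es. (\<forall>n. Es n \<in> fst G) \<longrightarrow> snd G (\<lambda>n. \<tau> (Es n) n)))"

definition game_le_II :: "'b game \<Rightarrow> 'c game \<Rightarrow> bool" where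
  "game_le_II G H \<longleftrightarrow>
     (II_mark_wins G \<longrightarrow> II_mark_wins H) \<and>
     (II_wins G \<longrightarrow> II_wins H) \<and>
     (\<not> I_wins G \<longrightarrow> \<not> I_wins H) \<and>
     (\<not> I_pre_wins G \<longrightarrow> \<not> I_pre_wins H)"

definition game_equiv :: "'b game \<Rightarrow> 'c game \<Rightarrow> bool" where
  "game_equiv G H \<longleftrightarrow> game_le_II G H \<and> game_le_II H G"

definition game_dual :: "'b game \<Rightarrow> 'c game \<Rightarrow> bool" where
  "game_dual G H \<longleftrightarrow>
     (I_wins G \<longleftrightarrow> II_wins H) \<and>
     (I_wins H \<longleftrightarrow> II_wins G) \<and>
     (I_pre_wins G \<longleftrightarrow> II_mark_wins H) \<and>
     (I_pre_wins H \<longleftrightarrow> II_mark_wins G)"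

definition game_equiv_One :: "'b game \<Rightarrow> 'c game \<Rightarrow> bool" where
  "game_equiv_One G H \<longleftrightarrow>
     (I_wins G \<longleftrightarrow> I_wins H) \<and> (I_pre_wins G \<longleftrightarrow> I_pre_wins H)"

definition game_equiv_Two :: "'b game \<Rightarrow> 'c game \<Rightarrow> bool" where
  "game_equiv_Two G H \<longleftrightarrow>
     (II_wins G \<longleftrightarrow> II_wins H) \<and> (II_mark_wins G \<longleftrightarrow> II_mark_wins H)"

definition Tychonoff_space :: "'a topology \<Rightarrow> bool" where
  "Tychonoff_space X \<longleftrightarrow> completely_regular_space X \<and> Hausdorff_space X"

definition sigma_compact_space :: "'a topology \<Rightarrow> bool" where
  "sigma_compact_space X \<longleftrightarrow>
     (\<exists>K :: nat \<Rightarrow> 'a set. (\<forall>n. compactin X (K n)) \<and> \<Union>(range K) = topspace X)"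

definition cpt_sets :: "'a topology \<Rightarrow> 'a set set" where
  "cpt_sets X = {K. compactin X K \<and> K \<noteq> {}}"

definition open_covers :: "'a topology \<Rightarrow> 'a set set set" where
  "open_covers X = {\<U>. (\<forall>U\<in>\<U>. openin X U) \<and> \<Union>\<U> = topspace X}"

definition omega_covers :: "'a topology \<Rightarrow> 'a set set set" where
  "omega_covers X = {\<U> \<in> open_covers X. topspace X \<notin> \<U> \<and>
      (\<forall>F. finite F \<and> F \<subseteq> topspace X \<longrightarrow> (\<exists>U\<in>\<U>. F \<subseteq> U))}"

definition k_covers :: "'a topology \<Rightarrow> 'a set set set" where
  "k_covers X = {\<U> \<in> open_covers X. topspace X \<notin> \<U> \<and>
      (\<forall>K. compactin X K \<longrightarrow> (\<exists>U\<in>\<U>. K \<subseteq> U))}"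

definition gamma_covers :: "'a topology \<Rightarrow> 'a set set set" where
  "gamma_covers X = {\<U> \<in> open_covers X. infinite \<U> \<and> topspace X \<notin> \<U> \<and>
      (\<forall>F. finite F \<and> F \<subseteq> topspace X \<longrightarrow> finite {U\<in>\<U>. \<not> F \<subseteq> U})}"

definition nbhds_of_set :: "'a topology \<Rightarrow> 'a set \<Rightarrow> 'a set set" where
  "nbhds_of_set X K = {U. openin X U \<and> U \<noteq> topspace X \<and> K \<subseteq> U}"

definition nbhds_cpt :: "'a topology \<Rightarrow> 'a set set set" where
  "nbhds_cpt X = nbhds_of_set X ` cpt_sets X"

definition nbhds_pt :: "'b topology \<Rightarrow> 'b \<Rightarrow> 'b set set" where
  "nbhds_pt Y y = {U. openin Y U \<and> y \<in> U}"

definition nonempty_opens :: "'b topology \<Rightarrow> 'b set set" where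
  "nonempty_opens Y = {U. openin Y U \<and> U \<noteq> {}}"

definition dense_sets :: "'b topology \<Rightarrow> 'b set set" where
  "dense_sets Y = {D. D \<subseteq> topspace Y \<and> Y closure_of D = topspace Y}"

definition closed_discrete_sets :: "'b topology \<Rightarrow> 'b set set" where
  "closed_discrete_sets Y = {S. S \<subseteq> topspace Y \<and> closedin Y S \<and>
      (\<forall>s\<in>S. \<exists>U. openin Y U \<and> U \<inter> S = {s})}"

definition clustering_sets :: "'b topology \<Rightarrow> 'b \<Rightarrow> 'b set set" where
  "clustering_sets Y y = {S. S \<subseteq> topspace Y \<and> y \<in> Y closure_of S}"

text \<open>C(X): continuous real functions on X, normalised to be 0 outside the
  carrier so that each continuous function has a unique representative.\<close>
definition Cfun :: "'a topology \<Rightarrow> ('a \<Rightarrow> real) set" where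
  "Cfun X = {f. continuous_map X euclideanreal f \<and> (\<forall>x. x \<notin> topspace X \<longrightarrow> f x = 0)}"

definition basic_nbhd :: "'a topology \<Rightarrow> ('a \<Rightarrow> real) \<Rightarrow> 'a set \<Rightarrow> real \<Rightarrow> ('a \<Rightarrow> real) set" where
  "basic_nbhd X f A \<epsilon> = {g \<in> Cfun X. \<forall>x\<in>A. \<bar>f x - g x\<bar> < \<epsilon>}"

definition Cp :: "'a topology \<Rightarrow> ('a \<Rightarrow> real) topology" where
  "Cp X = topology_generated_by
     {basic_nbhd X f A \<epsilon> | f A \<epsilon>. f \<in> Cfun X \<and> finite A \<and> A \<subseteq> topspace X \<and> \<epsilon> > 0}"

definition Ck :: "'a topology \<Rightarrow> ('a \<Rightarrow> real) topology" where
  "Ck X = topology_generated_by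
     {basic_nbhd X f A \<epsilon> | f A \<epsilon>. f \<in> Cfun X \<and> compactin X A \<and> \<epsilon> > 0}"

definition zero_fun :: "'a \<Rightarrow> real" where
  "zero_fun = (\<lambda>_. 0)"

definition cofinal_family :: "'b set set \<Rightarrow> 'b set set \<Rightarrow> 'b set set \<Rightarrow> bool" where
  "cofinal_family \<E> \<F> \<A> \<longleftrightarrow> \<A> \<subseteq> \<E> \<and> (\<forall>F\<in>\<F>. \<exists>E\<in>\<A>. E \<subseteq> F)"

definition cof_is_omega :: "'b set set \<Rightarrow> 'b set set \<Rightarrow> bool" where
  "cof_is_omega \<E> \<F> \<longleftrightarrow>
     (\<exists>\<A>. countable \<A> \<and> cofinal_family \<E> \<F> \<A>) \<and>
     \<not> (\<exists>\<A>. finite \<A> \<and> cofinal_family \<E> \<F> \<A>)"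

end

theory Submission
  imports Defs
begin

text \<open>
  Compact subsets of \<open>X\<close> are the dictionary between the two sides.  A \<open>C\<^sub>k\<close>-open set
  around \<open>g\<close> contains every function that agrees with \<open>g\<close> on some compact \<open>K\<close>, so One's
  moves in the function space games can be answered by \<open>\<N>(K)\<close>; an open \<open>U \<supseteq> K\<close> chosen
  there is turned back into a function by a Urysohn function that is large off \<open>U\<close>, and a
  function small on \<open>K\<close> into the open set where it is small.  Plays that miss a fixed finite
  set thereby become sequences of functions that escape to infinity at finitely many points
  (hence are closed discrete and do not accumulate at \<open>0\<close> in \<open>C\<^sub>p(X)\<close>), and plays
  accumulating at \<open>0\<close> become \<open>\<omega>\<close>-covers.  Translating strategies along this dictionary
  gives (i); for compact \<open>X\<close>, One wins all these games with a predetermined strategy.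

  Up to the equivalences of (i), each game there is of the form \<open>G\<^sub>1(\<E>, \<not>\<C>)\<close> with a
  partner \<open>G\<^sub>1(\<F>, \<C>)\<close> in (ii) such that every member of \<open>\<F>\<close> meets every member of \<open>\<E>\<close>
  and every selector of \<open>\<E>\<close> has its image in \<open>\<F>\<close>.  For such pairs a strategy of One in
  one game yields a strategy of Two in the other, which gives (iii) and then (ii).

  For (iv), a predetermined winning strategy of One in \<open>G\<^sub>1(\<N>[K(X)], \<not>\<Omega>\<^sub>X)\<close> is a
  sequence of compact sets covering \<open>X\<close>, and a countable family of \<open>C\<^sub>k\<close>-neighbourhoods of
  \<open>0\<close> cofinal among the \<open>C\<^sub>p\<close>-neighbourhoods must have compact kernels covering \<open>X\<close>.
  For (v) and (vi), a play that is not a \<open>\<gamma>\<close>-cover (not convergent) has a subsequence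
  that is not an \<open>\<omega>\<close>-cover (does not accumulate); since One's moves form a downward
  directed family, One can arrange that its plays are such subsequences.
\<close>

section \<open>Selection games\<close>

lemma fst_G1 [simp]: "fst (G1 E C) = E"
  and snd_G1 [simp]: "snd (G1 E C) x \<longleftrightarrow> range x \<in> C"
  and fst_G1_neg [simp]: "fst (G1_neg E C) = E"
  and snd_G1_neg [simp]: "snd (G1_neg E C) x \<longleftrightarrow> range x \<notin> C"
  by (simp_all add: G1_def G1_neg_def)

lemma I_pre_wins_imp_I_wins: "I_pre_wins G \<Longrightarrow> I_wins G"
proof -
  assume "I_pre_wins G"
  then obtain Es where "\<forall>n. Es n \<in> fst G" "\<forall>x. (\<forall>n. x n \<in> Es n) \<longrightarrow> \<not> snd G x"
    unfolding I_pre_wins_def by blast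
  then show "I_wins G" unfolding I_wins_def
    by (intro exI[of _ "\<lambda>ls. Es (length ls)"]) simp
qed

lemma II_mark_wins_imp_II_wins: "II_mark_wins G \<Longrightarrow> II_wins G"
proof -
  assume "II_mark_wins G"
  then obtain \<tau> where "\<forall>E n. E \<in> fst G \<longrightarrow> \<tau> E n \<in> E"
      and "\<forall>Es. (\<forall>n. Es n \<in> fst G) \<longrightarrow> snd G (\<lambda>n. \<tau> (Es n) n)"
    unfolding II_mark_wins_def by blast
  then show "II_wins G" unfolding II_wins_def
    by (intro exI[of _ "\<lambda>ls. \<tau> (last ls) (length ls - 1)"]) (auto dest: last_in_set)
qed

lemma I_pre_wins_imp_not_II_wins: "I_pre_wins G \<Longrightarrow> \<not> II_wins G"
proof
  assume "I_pre_wins G" "II_wins G"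
  then obtain Es where Es: "\<forall>n. Es n \<in> fst G" and I_win: "\<forall>x. (\<forall>n. x n \<in> Es n) \<longrightarrow> \<not> snd G x"
    unfolding I_pre_wins_def by blast
  obtain \<tau> where legal: "\<forall>ls. ls \<noteq> [] \<and> set ls \<subseteq> fst G \<longrightarrow> \<tau> ls \<in> last ls"
    and II_win: "\<forall>Es. (\<forall>n. Es n \<in> fst G) \<longrightarrow> snd G (\<lambda>n. \<tau> (map Es [0..<Suc n]))"
    using \<open>II_wins G\<close> unfolding II_wins_def by blast
  have "\<tau> (map Es [0..<Suc n]) \<in> last (map Es [0..<Suc n])" for n
  proof (rule legal[rule_format])
    show "map Es [0..<Suc n] \<noteq> [] \<and> set (map Es [0..<Suc n]) \<subseteq> fst G"
      using Es by (simp add: image_subset_iff del: upt_Suc)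
  qed
  then have "\<tau> (map Es [0..<Suc n]) \<in> Es n" for n
    by simp
  then have "\<not> snd G (\<lambda>n. \<tau> (map Es [0..<Suc n]))"
    using I_win[rule_format, of "\<lambda>n. \<tau> (map Es [0..<Suc n])"] by blast
  then show False using II_win Es by blast
qed

lemma game_le_II_if_I_pre_wins: "I_pre_wins G \<Longrightarrow> game_le_II G H"
  unfolding game_le_II_def
  by (metis I_pre_wins_imp_I_wins I_pre_wins_imp_not_II_wins II_mark_wins_imp_II_wins)

lemma game_le_II_trans: "game_le_II G H \<Longrightarrow> game_le_II H K \<Longrightarrow> game_le_II G K"
  unfolding game_le_II_def by blast

lemma game_equiv_refl: "game_equiv G G"
  unfolding game_equiv_def game_le_II_def by blast

lemma game_equiv_sym: "game_equiv G H \<Longrightarrow> game_equiv H G"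
  unfolding game_equiv_def by blast

lemma game_equiv_trans: "game_equiv G H \<Longrightarrow> game_equiv H K \<Longrightarrow> game_equiv G K"
  unfolding game_equiv_def by (meson game_le_II_trans)

lemma game_equiv_imp_game_equiv_One: "game_equiv G H \<Longrightarrow> game_equiv_One G H"
  unfolding game_equiv_def game_le_II_def game_equiv_One_def by blast

lemma game_dual_equiv:
  "game_dual G H \<Longrightarrow> game_equiv G G' \<Longrightarrow> game_equiv H H' \<Longrightarrow> game_dual G' H'"
  unfolding game_dual_def game_equiv_def game_le_II_def by blast

lemma game_le_II_dual:
  "game_dual G H \<Longrightarrow> game_dual G' H' \<Longrightarrow> game_le_II G G' \<Longrightarrow> game_le_II H' H"
  unfolding game_dual_def game_le_II_def by blast

lemma game_equiv_Two_dual: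
  "game_dual G H \<Longrightarrow> game_dual G' H' \<Longrightarrow> game_equiv_One G' G \<Longrightarrow> game_equiv_Two H H'"
  unfolding game_dual_def game_equiv_One_def game_equiv_Two_def by blast

text \<open>One's moves in \<open>H\<close> are translated into moves in \<open>G\<close> and Two's answers there back into
  answers in \<open>H\<close>, turning wins of Two in \<open>G\<close> into wins in \<open>H\<close>.\<close>
locale game_translation =
  fixes G :: "'b game" and H :: "'c game"
    and move :: "nat \<Rightarrow> 'c set \<Rightarrow> 'b set"
    and answer :: "nat \<Rightarrow> 'b \<Rightarrow> 'c set \<Rightarrow> 'c"
  assumes move_legal: "\<And>n E. E \<in> fst H \<Longrightarrow> move n E \<in> fst G"
    and answer_legal: "\<And>n E y. E \<in> fst H \<Longrightarrow> y \<in> move n E \<Longrightarrow> answer n y E \<in> E"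
    and answer_wins: "\<And>Es y. (\<forall>n. Es n \<in> fst H) \<Longrightarrow> (\<forall>n. y n \<in> move n (Es n)) \<Longrightarrow> snd G y
              \<Longrightarrow> snd H (\<lambda>n. answer n (y n) (Es n))"
begin

lemma II_mark_wins_transfer:
  assumes "II_mark_wins G" shows "II_mark_wins H"
proof -
  obtain \<tau> where legal: "\<forall>E n. E \<in> fst G \<longrightarrow> \<tau> E n \<in> E"
    and win: "\<forall>Es. (\<forall>n. Es n \<in> fst G) \<longrightarrow> snd G (\<lambda>n. \<tau> (Es n) n)"
    using assms unfolding II_mark_wins_def by blast
  show ?thesis unfolding II_mark_wins_def
  proof (intro exI[of _ "\<lambda>E n. answer n (\<tau> (move n E) n) E"] conjI allI impI)
    fix E n assume "E \<in> fst H"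
    then show "answer n (\<tau> (move n E) n) E \<in> E"
      using legal move_legal answer_legal by blast
  next
    fix Es :: "nat \<Rightarrow> 'c set" assume Es: "\<forall>n. Es n \<in> fst H"
    then have moves: "\<forall>n. move n (Es n) \<in> fst G" using move_legal by blast
    then have "snd G (\<lambda>n. \<tau> (move n (Es n)) n)" by (rule win[THEN spec, THEN mp])
    from answer_wins[OF Es _ this] show "snd H (\<lambda>n. answer n (\<tau> (move n (Es n)) n) (Es n))"
      using legal moves by blast
  qed
qed

lemma II_wins_transfer:
  assumes "II_wins G" shows "II_wins H"
proof -
  obtain \<tau> where legal: "\<forall>ls. ls \<noteq> [] \<and> set ls \<subseteq> fst G \<longrightarrow> \<tau> ls \<in> last ls"
    and win: "\<forall>Es. (\<forall>n. Es n \<in> fst G) \<longrightarrow> snd G (\<lambda>n. \<tau> (map Es [0..<Suc n]))"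
    using assms unfolding II_wins_def by blast
  define moves where "moves ls = map (\<lambda>i. move i (ls ! i)) [0..<length ls]" for ls
  have moves_map: "moves (map Es [0..<n]) = map (\<lambda>i. move i (Es i)) [0..<n]" for Es n
    unfolding moves_def by (intro map_cong) auto
  have moves_legal: "\<tau> (moves ls) \<in> move (length ls - 1) (last ls)"
    if "ls \<noteq> []" "set ls \<subseteq> fst H" for ls
  proof -
    have "set (moves ls) \<subseteq> fst G"
      using that move_legal unfolding moves_def by (auto simp: subset_iff)
    moreover have "moves ls \<noteq> []"
      using that unfolding moves_def by simp
    ultimately have "\<tau> (moves ls) \<in> last (moves ls)"
      using legal by blast
    moreover have "last (moves ls) = move (length ls - 1) (last ls)"
      using that unfolding moves_def by (simp add: last_map last_conv_nth)
    ultimately show ?thesis by simp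
  qed
  show ?thesis unfolding II_wins_def
  proof (intro exI[of _ "\<lambda>ls. answer (length ls - 1) (\<tau> (moves ls)) (last ls)"] conjI allI impI)
    fix ls :: "'c set list" assume "ls \<noteq> [] \<and> set ls \<subseteq> fst H"
    then show "answer (length ls - 1) (\<tau> (moves ls)) (last ls) \<in> last ls"
      using moves_legal answer_legal by (simp add: subset_iff)
  next
    fix Es :: "nat \<Rightarrow> 'c set" assume Es: "\<forall>n. Es n \<in> fst H"
    have "\<forall>n. \<tau> (moves (map Es [0..<Suc n])) \<in> move n (Es n)"
    proof
      fix n
      have "set (map Es [0..<Suc n]) \<subseteq> fst H" using Es by auto
      from moves_legal[OF _ this] show "\<tau> (moves (map Es [0..<Suc n])) \<in> move n (Es n)"
        by simp
    qed
    moreover have "snd G (\<lambda>n. \<tau> (moves (map Es [0..<Suc n])))"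
    proof -
      have "\<forall>n. move n (Es n) \<in> fst G" using move_legal Es by blast
      then have "snd G (\<lambda>n. \<tau> (map (\<lambda>i. move i (Es i)) [0..<Suc n]))"
        by (rule win[THEN spec, THEN mp])
      then show ?thesis by (simp only: moves_map)
    qed
    ultimately have "snd H (\<lambda>n. answer n (\<tau> (moves (map Es [0..<Suc n]))) (Es n))"
      by (rule answer_wins[OF Es])
    then show "snd H (\<lambda>n. answer (length (map Es [0..<Suc n]) - 1)
        (\<tau> (moves (map Es [0..<Suc n]))) (last (map Es [0..<Suc n])))"
      by simp
  qed
qed

lemma I_wins_transfer:
  assumes "I_wins H" shows "I_wins G"
proof -
  obtain \<sigma> where legal: "\<forall>ls. \<sigma> ls \<in> fst H"
    and win: "\<forall>x. (\<forall>n. x n \<in> \<sigma> (map x [0..<n])) \<longrightarrow> \<not> snd H x"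
    using assms unfolding I_wins_def by blast
  \<comment> \<open>One replays the \<open>H\<close>-game on the side, translating Two's answers in \<open>G\<close>.\<close>
  define replay where "replay = foldl (\<lambda>cs y. cs @ [answer (length cs) y (\<sigma> cs)]) []"
  show ?thesis unfolding I_wins_def
  proof (intro exI[of _ "\<lambda>ys. move (length ys) (\<sigma> (replay ys))"] conjI allI impI notI)
    fix ls show "move (length ls) (\<sigma> (replay ls)) \<in> fst G" using move_legal legal by blast
  next
    fix y assume y: "\<forall>n. y n \<in> move (length (map y [0..<n])) (\<sigma> (replay (map y [0..<n])))"
      and "snd G y"
    define c where "c n = answer n (y n) (\<sigma> (replay (map y [0..<n])))" for n
    have replay_c: "replay (map y [0..<n]) = map c [0..<n]" for n
      by (induction n) (simp_all add: replay_def c_def)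
    have c_eq: "c n = answer n (y n) (\<sigma> (map c [0..<n]))" for n
      by (simp only: c_def replay_c)
    have "snd H (\<lambda>n. answer n (y n) (\<sigma> (map c [0..<n])))"
      using answer_wins legal y \<open>snd G y\<close> by (simp add: replay_c)
    then have "snd H c" by (simp only: c_eq[symmetric])
    moreover have "c n \<in> \<sigma> (map c [0..<n])" for n
      using answer_legal legal y by (simp add: c_eq replay_c)
    ultimately show False
      using win by blast
  qed
qed

lemma I_pre_wins_transfer:
  assumes "I_pre_wins H" shows "I_pre_wins G"
proof -
  obtain Es where legal: "\<forall>n. Es n \<in> fst H" and win: "\<forall>x. (\<forall>n. x n \<in> Es n) \<longrightarrow> \<not> snd H x"
    using assms unfolding I_pre_wins_def by blast
  show ?thesis unfolding I_pre_wins_def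
  proof (intro exI[of _ "\<lambda>n. move n (Es n)"] conjI allI impI notI)
    fix n show "move n (Es n) \<in> fst G" using move_legal legal by blast
  next
    fix y assume "\<forall>n. y n \<in> move n (Es n)" "snd G y"
    then have "snd H (\<lambda>n. answer n (y n) (Es n))" "\<forall>n. answer n (y n) (Es n) \<in> Es n"
      using answer_wins answer_legal legal by blast+
    then show False using win[rule_format, of "\<lambda>n. answer n (y n) (Es n)"] by blast
  qed
qed

lemma game_le_II: "game_le_II G H"
  unfolding game_le_II_def
  using II_mark_wins_transfer II_wins_transfer I_wins_transfer I_pre_wins_transfer by blast

end

lemma II_strategy_from_I_strategy:
  fixes \<sigma> :: "'b list \<Rightarrow> 'b set"
  assumes meet: "\<And>U N. U \<in> M2 \<Longrightarrow> N \<in> M1 \<Longrightarrow> U \<inter> N \<noteq> {}"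
    and legal: "\<forall>ls. \<sigma> ls \<in> M1"
    and win: "\<forall>x. (\<forall>n. x n \<in> \<sigma> (map x [0..<n])) \<longrightarrow> P x"
  shows "\<exists>\<tau>. (\<forall>ls. ls \<noteq> [] \<and> set ls \<subseteq> M2 \<longrightarrow> \<tau> ls \<in> last ls) \<and>
             (\<forall>Es. (\<forall>n. Es n \<in> M2) \<longrightarrow> P (\<lambda>n. \<tau> (map Es [0..<Suc n])))"
proof -
  define pick where "pick U h = (SOME u. u \<in> U \<inter> \<sigma> h)" for U h
  have pick: "pick U h \<in> U \<inter> \<sigma> h" if "U \<in> M2" for U h
  proof -
    have "U \<inter> \<sigma> h \<noteq> {}" using meet[OF that] legal by blast
    then show ?thesis unfolding pick_def by (rule some_in_eq[THEN iffD2])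
  qed
  \<comment> \<open>Two answers inside the move of \<open>\<sigma>\<close> for the sequence of Two's own earlier answers.\<close>
  define answers where "answers = foldl (\<lambda>h U. h @ [pick U h]) []"
  have answers_snoc: "answers (ls @ [U]) = answers ls @ [pick U (answers ls)]" for ls U
    by (simp add: answers_def)
  show ?thesis
  proof (intro exI[of _ "\<lambda>ls. last (answers ls)"] conjI allI impI)
    fix ls :: "'b set list" assume ls: "ls \<noteq> [] \<and> set ls \<subseteq> M2"
    then have "ls = butlast ls @ [last ls]" "last ls \<in> M2" by auto
    then show "last (answers ls) \<in> last ls"
      using pick by (metis IntD1 answers_snoc last_snoc)
  next
    fix Es :: "nat \<Rightarrow> 'b set" assume Es: "\<forall>n. Es n \<in> M2"
    define x where "x n = pick (Es n) (answers (map Es [0..<n]))" for n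
    have answers_x: "answers (map Es [0..<n]) = map x [0..<n]" for n
      by (induction n) (simp_all add: answers_snoc x_def answers_def)
    have "x n = pick (Es n) (map x [0..<n])" for n
      by (simp only: x_def answers_x)
    then have "x n \<in> \<sigma> (map x [0..<n])" for n
      using pick Es by (metis IntD2)
    then have "P x" using win by blast
    moreover have "last (answers (map Es [0..<Suc n])) = x n" for n
      by (simp only: answers_x) simp
    ultimately show "P (\<lambda>n. last (answers (map Es [0..<Suc n])))" by simp
  qed
qed

lemma I_strategy_from_II_strategy:
  fixes \<tau> :: "'c set list \<Rightarrow> 'c"
  assumes answers: "\<And>ls. set ls \<subseteq> M2 \<Longrightarrow> \<exists>N\<in>M1. \<forall>u\<in>N. \<exists>U\<in>M2. \<tau> (ls @ [U]) = u"
    and win: "\<forall>Es. (\<forall>n. Es n \<in> M2) \<longrightarrow> P (\<lambda>n. \<tau> (map Es [0..<Suc n]))"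
  shows "\<exists>\<sigma>. (\<forall>ls. \<sigma> ls \<in> M1) \<and> (\<forall>x. (\<forall>n. x n \<in> \<sigma> (map x [0..<n])) \<longrightarrow> P x)"
proof -
  \<comment> \<open>One keeps a run of \<open>\<tau>\<close> producing Two's choices and plays a set of answers of \<open>\<tau>\<close>.\<close>
  define cause where "cause h u = (SOME U. U \<in> M2 \<and> \<tau> (h @ [U]) = u)" for h u
  define run where "run = foldl (\<lambda>h u. h @ [cause h u]) []"
  have run_snoc: "run (h @ [u]) = run h @ [cause (run h) u]" for h u
    by (simp add: run_def)
  define \<sigma> where "\<sigma> h = (SOME N. N \<in> M1 \<and>
      (set (run h) \<subseteq> M2 \<longrightarrow> (\<forall>u\<in>N. \<exists>U\<in>M2. \<tau> (run h @ [U]) = u)))" for h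
  have \<sigma>: "\<sigma> h \<in> M1 \<and> (set (run h) \<subseteq> M2 \<longrightarrow> (\<forall>u\<in>\<sigma> h. \<exists>U\<in>M2. \<tau> (run h @ [U]) = u))" for h
  proof -
    obtain N where "N \<in> M1" using answers[of "[]"] by auto
    then have "\<exists>N. N \<in> M1 \<and> (set (run h) \<subseteq> M2 \<longrightarrow> (\<forall>u\<in>N. \<exists>U\<in>M2. \<tau> (run h @ [U]) = u))"
      using answers by blast
    then show ?thesis unfolding \<sigma>_def by (rule someI_ex)
  qed
  show ?thesis
  proof (intro exI[of _ \<sigma>] conjI allI impI)
    fix ls show "\<sigma> ls \<in> M1" using \<sigma> by blast
  next
    fix x assume x: "\<forall>n. x n \<in> \<sigma> (map x [0..<n])"
    define Us where "Us n = cause (run (map x [0..<n])) (x n)" for n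
    have run_x: "run (map x [0..<n]) = map Us [0..<n] \<and>
        (\<forall>i<n. Us i \<in> M2 \<and> \<tau> (map Us [0..<Suc i]) = x i)" for n
    proof (induction n)
      case 0 then show ?case by (simp add: run_def)
    next
      case (Suc n)
      then have "set (run (map x [0..<n])) \<subseteq> M2" by auto
      then have "\<exists>U. U \<in> M2 \<and> \<tau> (run (map x [0..<n]) @ [U]) = x n" using \<sigma> x by blast
      then have "Us n \<in> M2 \<and> \<tau> (run (map x [0..<n]) @ [Us n]) = x n"
        unfolding Us_def cause_def by (rule someI_ex)
      then show ?case using Suc by (auto simp: run_snoc Us_def less_Suc_eq)
    qed
    then have "P (\<lambda>n. \<tau> (map Us [0..<Suc n]))" using win by blast
    moreover have "(\<lambda>n. \<tau> (map Us [0..<Suc n])) = x" using run_x by blast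
    ultimately show "P x" by simp
  qed
qed

lemma II_Markov_from_I_predetermined:
  fixes Es :: "nat \<Rightarrow> 'a set"
  assumes meet: "\<And>U N. U \<in> M2 \<Longrightarrow> N \<in> M1 \<Longrightarrow> U \<inter> N \<noteq> {}"
    and legal: "\<forall>n. Es n \<in> M1" and win: "\<forall>x. (\<forall>n. x n \<in> Es n) \<longrightarrow> P x"
  shows "\<exists>\<tau>. (\<forall>E n. E \<in> M2 \<longrightarrow> \<tau> E n \<in> E) \<and> (\<forall>Es'. (\<forall>n. Es' n \<in> M2) \<longrightarrow> P (\<lambda>n. \<tau> (Es' n) n))"
proof -
  define \<tau> where "\<tau> U n = (SOME u. u \<in> U \<inter> Es n)" for U n
  have \<tau>: "\<tau> U n \<in> U \<inter> Es n" if "U \<in> M2" for U n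
  proof -
    have "U \<inter> Es n \<noteq> {}" using meet[OF that] legal by blast
    then show ?thesis unfolding \<tau>_def by (rule some_in_eq[THEN iffD2])
  qed
  show ?thesis
  proof (intro exI[of _ \<tau>] conjI allI impI)
    fix E n assume "E \<in> M2" then show "\<tau> E n \<in> E" using \<tau> by blast
  next
    fix Es' :: "nat \<Rightarrow> 'a set" assume "\<forall>n. Es' n \<in> M2"
    then show "P (\<lambda>n. \<tau> (Es' n) n)" using \<tau> win[rule_format, of "\<lambda>n. \<tau> (Es' n) n"] by blast
  qed
qed

lemma I_predetermined_from_II_Markov:
  assumes answers: "\<And>n. \<exists>N\<in>M1. \<forall>u\<in>N. \<exists>U\<in>M2. \<tau> U n = u"
    and win: "\<forall>Es. (\<forall>n. Es n \<in> M2) \<longrightarrow> P (\<lambda>n. \<tau> (Es n) n)"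
  shows "\<exists>Es. (\<forall>n. Es n \<in> M1) \<and> (\<forall>x. (\<forall>n. x n \<in> Es n) \<longrightarrow> P x)"
proof -
  obtain Es where Es: "\<forall>n. Es n \<in> M1 \<and> (\<forall>u\<in>Es n. \<exists>U\<in>M2. \<tau> U n = u)"
    using answers by metis
  show ?thesis
  proof (intro exI[of _ Es] conjI allI impI)
    fix n show "Es n \<in> M1" using Es by blast
  next
    fix x assume "\<forall>n. x n \<in> Es n"
    then have "\<forall>n. \<exists>U. U \<in> M2 \<and> \<tau> U n = x n" using Es by blast
    then obtain Us where Us: "\<forall>n. Us n \<in> M2 \<and> \<tau> (Us n) n = x n" by metis
    then have "P (\<lambda>n. \<tau> (Us n) n)" using win by blast
    moreover have "(\<lambda>n. \<tau> (Us n) n) = x" using Us by auto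
    ultimately show "P x" by simp
  qed
qed

locale dual_families =
  fixes E F :: "'b set set"
  assumes meets: "\<And>U N. U \<in> F \<Longrightarrow> N \<in> E \<Longrightarrow> U \<inter> N \<noteq> {}"
    and selector_image: "\<And>f. (\<forall>N\<in>E. f N \<in> N) \<Longrightarrow> f ` E \<in> F"
begin

lemma meets_flipped: "N \<in> E \<Longrightarrow> U \<in> F \<Longrightarrow> N \<inter> U \<noteq> {}"
  using meets by blast

lemma answers_contain_member:
  assumes legal: "\<And>U. U \<in> F \<Longrightarrow> \<tau> U \<in> U"
  shows "\<exists>N\<in>E. \<forall>u\<in>N. \<exists>U\<in>F. \<tau> U = u"
proof (rule ccontr)
  \<comment> \<open>Otherwise a selector avoiding all answers has an image in \<open>F\<close> with no legal answer.\<close>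
  assume "\<not> ?thesis"
  then obtain f where f: "\<forall>N\<in>E. f N \<in> N \<and> (\<forall>U\<in>F. \<tau> U \<noteq> f N)" by metis
  then have "f ` E \<in> F" using selector_image by blast
  then show False using f legal by fast
qed

lemma answers_form_member:
  assumes legal: "\<And>N. N \<in> E \<Longrightarrow> \<tau> N \<in> N"
  shows "\<exists>U\<in>F. \<forall>u\<in>U. \<exists>N\<in>E. \<tau> N = u"
  using selector_image[of \<tau>] legal by blast

lemma I_wins_G1_neg_iff: "I_wins (G1_neg E C) \<longleftrightarrow> II_wins (G1 F C)"
proof
  assume "I_wins (G1_neg E C)"
  then obtain \<sigma> where "\<forall>ls. \<sigma> ls \<in> E" "\<forall>x. (\<forall>n. x n \<in> \<sigma> (map x [0..<n])) \<longrightarrow> range x \<in> C"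
    unfolding I_wins_def by auto
  from II_strategy_from_I_strategy[OF meets this] show "II_wins (G1 F C)"
    unfolding II_wins_def by simp
next
  assume "II_wins (G1 F C)"
  then obtain \<tau> where legal: "\<forall>ls. ls \<noteq> [] \<and> set ls \<subseteq> F \<longrightarrow> \<tau> ls \<in> last ls"
    and win: "\<forall>Es. (\<forall>n. Es n \<in> F) \<longrightarrow> range (\<lambda>n. \<tau> (map Es [0..<Suc n])) \<in> C"
    unfolding II_wins_def by auto
  have "\<exists>N\<in>E. \<forall>u\<in>N. \<exists>U\<in>F. \<tau> (ls @ [U]) = u" if "set ls \<subseteq> F" for ls
  proof (rule answers_contain_member)
    fix U assume "U \<in> F"
    then show "\<tau> (ls @ [U]) \<in> U" using legal[rule_format, of "ls @ [U]"] that by simp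
  qed
  from I_strategy_from_II_strategy[OF this win] show "I_wins (G1_neg E C)"
    unfolding I_wins_def by simp
qed

lemma I_wins_G1_iff: "I_wins (G1 F C) \<longleftrightarrow> II_wins (G1_neg E C)"
proof
  assume "I_wins (G1 F C)"
  then obtain \<sigma> where "\<forall>ls. \<sigma> ls \<in> F" "\<forall>x. (\<forall>n. x n \<in> \<sigma> (map x [0..<n])) \<longrightarrow> range x \<notin> C"
    unfolding I_wins_def by auto
  from II_strategy_from_I_strategy[OF meets_flipped this] show "II_wins (G1_neg E C)"
    unfolding II_wins_def by simp
next
  assume "II_wins (G1_neg E C)"
  then obtain \<tau> where legal: "\<forall>ls. ls \<noteq> [] \<and> set ls \<subseteq> E \<longrightarrow> \<tau> ls \<in> last ls"
    and win: "\<forall>Es. (\<forall>n. Es n \<in> E) \<longrightarrow> range (\<lambda>n. \<tau> (map Es [0..<Suc n])) \<notin> C"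
    unfolding II_wins_def by auto
  have "\<exists>U\<in>F. \<forall>u\<in>U. \<exists>N\<in>E. \<tau> (ls @ [N]) = u" if "set ls \<subseteq> E" for ls
  proof (rule answers_form_member)
    fix N assume "N \<in> E"
    then show "\<tau> (ls @ [N]) \<in> N" using legal[rule_format, of "ls @ [N]"] that by simp
  qed
  from I_strategy_from_II_strategy[OF this win] show "I_wins (G1 F C)"
    unfolding I_wins_def by simp
qed

lemma I_pre_wins_G1_neg_iff: "I_pre_wins (G1_neg E C) \<longleftrightarrow> II_mark_wins (G1 F C)"
proof
  assume "I_pre_wins (G1_neg E C)"
  then obtain Es :: "nat \<Rightarrow> 'b set" where "\<forall>n. Es n \<in> E" "\<forall>x. (\<forall>n. x n \<in> Es n) \<longrightarrow> range x \<in> C"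
    unfolding I_pre_wins_def by auto
  from II_Markov_from_I_predetermined[OF meets this] show "II_mark_wins (G1 F C)"
    unfolding II_mark_wins_def by simp
next
  assume "II_mark_wins (G1 F C)"
  then obtain \<tau> :: "'b set \<Rightarrow> nat \<Rightarrow> 'b" where legal: "\<forall>U n. U \<in> F \<longrightarrow> \<tau> U n \<in> U"
    and win: "\<forall>Es. (\<forall>n. Es n \<in> F) \<longrightarrow> range (\<lambda>n. \<tau> (Es n) n) \<in> C"
    unfolding II_mark_wins_def by auto
  have "\<exists>N\<in>E. \<forall>u\<in>N. \<exists>U\<in>F. \<tau> U n = u" for n
    using legal by (intro answers_contain_member) auto
  from I_predetermined_from_II_Markov[OF this win] show "I_pre_wins (G1_neg E C)"
    unfolding I_pre_wins_def by simp
qed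

lemma I_pre_wins_G1_iff: "I_pre_wins (G1 F C) \<longleftrightarrow> II_mark_wins (G1_neg E C)"
proof
  assume "I_pre_wins (G1 F C)"
  then obtain Es :: "nat \<Rightarrow> 'b set" where "\<forall>n. Es n \<in> F" "\<forall>x. (\<forall>n. x n \<in> Es n) \<longrightarrow> range x \<notin> C"
    unfolding I_pre_wins_def by auto
  from II_Markov_from_I_predetermined[OF meets_flipped this] show "II_mark_wins (G1_neg E C)"
    unfolding II_mark_wins_def by simp
next
  assume "II_mark_wins (G1_neg E C)"
  then obtain \<tau> :: "'b set \<Rightarrow> nat \<Rightarrow> 'b" where legal: "\<forall>U n. U \<in> E \<longrightarrow> \<tau> U n \<in> U"
    and win: "\<forall>Es. (\<forall>n. Es n \<in> E) \<longrightarrow> range (\<lambda>n. \<tau> (Es n) n) \<notin> C"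
    unfolding II_mark_wins_def by auto
  have "\<exists>U\<in>F. \<forall>u\<in>U. \<exists>N\<in>E. \<tau> N n = u" for n
    using legal by (intro answers_form_member) auto
  from I_predetermined_from_II_Markov[OF this win] show "I_pre_wins (G1 F C)"
    unfolding I_pre_wins_def by simp
qed

lemma game_dual: "game_dual (G1_neg E C) (G1 F C)"
  unfolding game_dual_def
  using I_wins_G1_neg_iff I_wins_G1_iff I_pre_wins_G1_neg_iff I_pre_wins_G1_iff by blast

end

lemma I_wins_weaker_target:
  assumes weaker: "\<And>x. (\<forall>n. x n \<in> \<Union>E) \<Longrightarrow> P x \<Longrightarrow> Q x"
  shows "I_wins (E, Q) \<Longrightarrow> I_wins (E, P)" and "I_pre_wins (E, Q) \<Longrightarrow> I_pre_wins (E, P)"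
proof -
  assume "I_wins (E, Q)"
  then obtain \<sigma> where legal: "\<forall>ls. \<sigma> ls \<in> E"
    and win: "\<forall>x. (\<forall>n. x n \<in> \<sigma> (map x [0..<n])) \<longrightarrow> \<not> Q x"
    unfolding I_wins_def by auto
  show "I_wins (E, P)" unfolding I_wins_def
  proof (intro exI[of _ \<sigma>] conjI allI impI notI)
    fix x assume "\<forall>n. x n \<in> \<sigma> (map x [0..<n])" "snd (E, P) x"
    moreover from this(1) have "\<forall>n. x n \<in> \<Union>E" using legal by blast
    ultimately show False using weaker win by auto
  qed (use legal in simp)
next
  assume "I_pre_wins (E, Q)"
  then obtain Es :: "nat \<Rightarrow> _" where legal: "\<forall>n. Es n \<in> E"
    and win: "\<forall>x. (\<forall>n. x n \<in> Es n) \<longrightarrow> \<not> Q x"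
    unfolding I_pre_wins_def by auto
  show "I_pre_wins (E, P)" unfolding I_pre_wins_def
  proof (intro exI[of _ Es] conjI allI impI notI)
    fix x assume "\<forall>n. x n \<in> Es n" "snd (E, P) x"
    moreover from this(1) have "\<forall>n. x n \<in> \<Union>E" using legal by blast
    ultimately show False using weaker win by auto
  qed (use legal in simp)
qed

locale downward_directed =
  fixes E :: "'b set set"
  assumes lower_bound: "\<And>S. finite S \<Longrightarrow> S \<subseteq> E \<Longrightarrow> S \<noteq> {} \<Longrightarrow> \<exists>M\<in>E. \<forall>s\<in>S. M \<subseteq> s"
begin

text \<open>If every play won under \<open>Q\<close> has a subsequence won under \<open>P\<close>, One shrinks its moves
  below all earlier ones, so that subsequences of plays against the new strategy are plays
  against the old one.\<close>

lemma I_wins_subsequence: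
  assumes subseq: "\<And>x. (\<forall>n. x n \<in> \<Union>E) \<Longrightarrow> Q x \<Longrightarrow> \<exists>r. strict_mono r \<and> P (x \<circ> r)"
    and "I_wins (E, P)"
  shows "I_wins (E, Q)"
proof -
  obtain \<sigma> where legal: "\<forall>ls. \<sigma> ls \<in> E" and win: "\<forall>x. (\<forall>n. x n \<in> \<sigma> (map x [0..<n])) \<longrightarrow> \<not> P x"
    using \<open>I_wins (E, P)\<close> unfolding I_wins_def by auto
  define shorter where "shorter h = {s. set s \<subseteq> set h \<and> length s \<le> length h}" for h :: "'b list"
  have "\<exists>M. M \<in> E \<and> (\<forall>s\<in>shorter h. M \<subseteq> \<sigma> s)" for h
  proof -
    have "finite (\<sigma> ` shorter h)"
      unfolding shorter_def by (intro finite_imageI finite_lists_length_le) auto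
    moreover have "\<sigma> ` shorter h \<noteq> {}" unfolding shorter_def by auto
    ultimately show ?thesis using lower_bound[of "\<sigma> ` shorter h"] legal by blast
  qed
  then obtain \<sigma>' where \<sigma>': "\<forall>h. \<sigma>' h \<in> E \<and> (\<forall>s\<in>shorter h. \<sigma>' h \<subseteq> \<sigma> s)" by metis
  show ?thesis unfolding I_wins_def
  proof (intro exI[of _ \<sigma>'] conjI allI impI notI)
    fix ls show "\<sigma>' ls \<in> fst (E, Q)" using \<sigma>' by simp
  next
    fix x assume x: "\<forall>n. x n \<in> \<sigma>' (map x [0..<n])" and "snd (E, Q) x"
    have "\<forall>n. x n \<in> \<Union>E" using x \<sigma>' by blast
    moreover have "Q x" using \<open>snd (E, Q) x\<close> by simp
    ultimately obtain r where r: "strict_mono r" and "P (x \<circ> r)" using subseq by blast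
    moreover have "\<forall>k. (x \<circ> r) k \<in> \<sigma> (map (x \<circ> r) [0..<k])"
    proof
      fix k
      have "map (x \<circ> r) [0..<k] \<in> shorter (map x [0..<r k])"
        unfolding shorter_def using r seq_suble[OF r, of k] by (auto simp: strict_mono_less)
      then show "(x \<circ> r) k \<in> \<sigma> (map (x \<circ> r) [0..<k])" using x \<sigma>' by auto
    qed
    ultimately show False using win[rule_format, of "x \<circ> r"] by blast
  qed
qed

lemma I_pre_wins_subsequence:
  assumes subseq: "\<And>x. (\<forall>n. x n \<in> \<Union>E) \<Longrightarrow> Q x \<Longrightarrow> \<exists>r. strict_mono r \<and> P (x \<circ> r)"
    and "I_pre_wins (E, P)"
  shows "I_pre_wins (E, Q)"
proof -
  obtain Es where legal: "\<forall>n. Es n \<in> E" and win: "\<forall>x. (\<forall>n. x n \<in> Es n) \<longrightarrow> \<not> P x"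
    using \<open>I_pre_wins (E, P)\<close> unfolding I_pre_wins_def by auto
  have "\<exists>M. M \<in> E \<and> (\<forall>m\<le>n. M \<subseteq> Es m)" for n
    using lower_bound[of "Es ` {..n}"] legal by blast
  then obtain Es' where Es': "\<forall>n. Es' n \<in> E \<and> (\<forall>m\<le>n. Es' n \<subseteq> Es m)" by metis
  show ?thesis unfolding I_pre_wins_def
  proof (intro exI[of _ Es'] conjI allI impI notI)
    fix n show "Es' n \<in> fst (E, Q)" using Es' by simp
  next
    fix x assume x: "\<forall>n. x n \<in> Es' n" and "snd (E, Q) x"
    have "\<forall>n. x n \<in> \<Union>E" using x Es' by blast
    moreover have "Q x" using \<open>snd (E, Q) x\<close> by simp
    ultimately obtain r where r: "strict_mono r" and "P (x \<circ> r)" using subseq by blast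
    moreover have "\<forall>k. (x \<circ> r) k \<in> Es k"
      using x Es' seq_suble[OF r] by auto
    ultimately show False using win[rule_format, of "x \<circ> r"] by blast
  qed
qed

lemma game_equiv_One_subsequence:
  assumes "\<And>x. (\<forall>n. x n \<in> \<Union>E) \<Longrightarrow> P x \<Longrightarrow> Q x"
    and "\<And>x. (\<forall>n. x n \<in> \<Union>E) \<Longrightarrow> Q x \<Longrightarrow> \<exists>r. strict_mono r \<and> P (x \<circ> r)"
  shows "game_equiv_One (E, Q) (E, P)"
  unfolding game_equiv_One_def
proof (intro conjI iffI)
  show "I_wins (E, Q) \<Longrightarrow> I_wins (E, P)" by (rule I_wins_weaker_target(1)[OF assms(1)])
  show "I_pre_wins (E, Q) \<Longrightarrow> I_pre_wins (E, P)" by (rule I_wins_weaker_target(2)[OF assms(1)])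
  show "I_wins (E, P) \<Longrightarrow> I_wins (E, Q)" by (rule I_wins_subsequence[OF assms(2)])
  show "I_pre_wins (E, P) \<Longrightarrow> I_pre_wins (E, Q)" by (rule I_pre_wins_subsequence[OF assms(2)])
qed

end

section \<open>The function spaces \<open>C\<^sub>p(X)\<close> and \<open>C\<^sub>k(X)\<close>\<close>

definition zero_ext :: "'a topology \<Rightarrow> ('a \<Rightarrow> real) \<Rightarrow> 'a \<Rightarrow> real" where
  "zero_ext X f x = (if x \<in> topspace X then f x else 0)"

lemma zero_ext_in_Cfun: "continuous_map X euclideanreal f \<Longrightarrow> zero_ext X f \<in> Cfun X"
  unfolding Cfun_def zero_ext_def by (auto elim!: continuous_map_eq)

lemma zero_ext_apply [simp]: "x \<in> topspace X \<Longrightarrow> zero_ext X f x = f x"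
  by (simp add: zero_ext_def)

lemma Cfun_continuous_map: "f \<in> Cfun X \<Longrightarrow> continuous_map X euclideanreal f"
  by (simp add: Cfun_def)

lemma Cfun_outside: "f \<in> Cfun X \<Longrightarrow> x \<notin> topspace X \<Longrightarrow> f x = 0"
  by (simp add: Cfun_def)

lemma zero_fun_in_Cfun [simp]: "zero_fun \<in> Cfun X"
  by (simp add: Cfun_def zero_fun_def)

lemma zero_fun_apply [simp]: "zero_fun x = 0"
  by (simp add: zero_fun_def)

lemma mem_basic_nbhd: "g \<in> basic_nbhd X f A \<epsilon> \<longleftrightarrow> g \<in> Cfun X \<and> (\<forall>x\<in>A. \<bar>f x - g x\<bar> < \<epsilon>)"
  by (simp add: basic_nbhd_def)

lemma center_in_basic_nbhd: "f \<in> Cfun X \<Longrightarrow> \<epsilon> > 0 \<Longrightarrow> f \<in> basic_nbhd X f A \<epsilon>"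
  by (simp add: basic_nbhd_def)

lemma basic_nbhd_mono: "A \<subseteq> A' \<Longrightarrow> \<epsilon>' \<le> \<epsilon> \<Longrightarrow> basic_nbhd X f A' \<epsilon>' \<subseteq> basic_nbhd X f A \<epsilon>"
  unfolding basic_nbhd_def by fastforce

lemma basic_nbhd_subset_Cfun: "basic_nbhd X f A \<epsilon> \<subseteq> Cfun X"
  unfolding basic_nbhd_def by auto

lemma compactin_continuous_less_margin:
  assumes "compactin X A" "continuous_map X euclideanreal h" "\<forall>x\<in>A. h x < e"
  shows "\<exists>d>0. \<forall>x\<in>A. h x \<le> e - d"
proof (cases "A = {}")
  case False
  have "compact (h ` A)" using image_compactin assms by (metis compactin_euclidean_iff)
  then obtain m where m: "m \<in> h ` A" "\<forall>t\<in>h ` A. t \<le> m"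
    using compact_attains_sup[of "h ` A"] False by blast
  then show ?thesis using assms(3) by (intro exI[of _ "e - m"]) auto
qed (intro exI[of _ 1], simp)

definition Cfun_topology :: "'a topology \<Rightarrow> ('a set \<Rightarrow> bool) \<Rightarrow> ('a \<Rightarrow> real) topology" where
  "Cfun_topology X P = topology_generated_by
     {basic_nbhd X f A \<epsilon> | f A \<epsilon>. f \<in> Cfun X \<and> P A \<and> \<epsilon> > 0}"

lemma Cp_eq_Cfun_topology: "Cp X = Cfun_topology X (\<lambda>A. finite A \<and> A \<subseteq> topspace X)"
  unfolding Cp_def Cfun_topology_def by (simp add: conj_assoc)

lemma Ck_eq_Cfun_topology: "Ck X = Cfun_topology X (compactin X)"
  unfolding Ck_def Cfun_topology_def by simp

lemma topspace_Cfun_topology: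
  assumes "P {}"
  shows "topspace (Cfun_topology X P) = Cfun X"
proof -
  have "Cfun X = basic_nbhd X zero_fun {} 1" unfolding basic_nbhd_def by auto
  then have "Cfun X \<in> {basic_nbhd X f A \<epsilon> | f A \<epsilon>. f \<in> Cfun X \<and> P A \<and> \<epsilon> > 0}"
    using assms by fastforce
  then show ?thesis unfolding Cfun_topology_def topology_generated_by_topspace
    using basic_nbhd_subset_Cfun by blast
qed

lemma openin_Cfun_topology_basic_nbhd:
  "f \<in> Cfun X \<Longrightarrow> P A \<Longrightarrow> \<epsilon> > 0 \<Longrightarrow> openin (Cfun_topology X P) (basic_nbhd X f A \<epsilon>)"
  unfolding Cfun_topology_def by (rule topology_generated_by_Basis) blast

lemma basic_nbhd_shrink:
  assumes "compactin X A" and "f \<in> Cfun X" and "g \<in> basic_nbhd X f A \<epsilon>"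
  shows "\<exists>d>0. basic_nbhd X g A d \<subseteq> basic_nbhd X f A \<epsilon>"
proof -
  have g: "g \<in> Cfun X" "\<forall>x\<in>A. \<bar>f x - g x\<bar> < \<epsilon>" using assms(3) by (auto simp: mem_basic_nbhd)
  have "continuous_map X euclideanreal (\<lambda>x. \<bar>f x - g x\<bar>)"
    using assms(2) g(1) by (intro continuous_intros Cfun_continuous_map)
  then obtain d where "d > 0" "\<forall>x\<in>A. \<bar>f x - g x\<bar> \<le> \<epsilon> - d"
    using compactin_continuous_less_margin[OF assms(1)] g(2) by blast
  then show ?thesis
    by (intro exI[of _ d]) (force simp: mem_basic_nbhd)
qed

lemma openin_Cfun_topology_imp_basic_nbhd:
  assumes union: "\<And>A B. P A \<Longrightarrow> P B \<Longrightarrow> P (A \<union> B)" and compact: "\<And>A. P A \<Longrightarrow> compactin X A"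
    and "openin (Cfun_topology X P) W"
  shows "\<forall>g\<in>W. \<exists>A d. P A \<and> d > 0 \<and> basic_nbhd X g A d \<subseteq> W"
proof -
  have "generate_topology_on {basic_nbhd X f A \<epsilon> | f A \<epsilon>. f \<in> Cfun X \<and> P A \<and> \<epsilon> > 0} W"
    using assms(3) unfolding Cfun_topology_def by (rule openin_topology_generated_by)
  then show ?thesis
  proof (induction rule: generate_topology_on.induct)
    case (Int a b)
    show ?case
    proof
      fix g assume "g \<in> a \<inter> b"
      then obtain A1 d1 A2 d2 where "P A1" "d1 > 0" "basic_nbhd X g A1 d1 \<subseteq> a"
        and "P A2" "d2 > 0" "basic_nbhd X g A2 d2 \<subseteq> b" using Int.IH by blast
      moreover have "basic_nbhd X g (A1 \<union> A2) (min d1 d2) \<subseteq> basic_nbhd X g A1 d1"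
        "basic_nbhd X g (A1 \<union> A2) (min d1 d2) \<subseteq> basic_nbhd X g A2 d2"
        by (rule basic_nbhd_mono; simp)+
      ultimately show "\<exists>A d. P A \<and> d > 0 \<and> basic_nbhd X g A d \<subseteq> a \<inter> b"
        using union by (intro exI[of _ "A1 \<union> A2"] exI[of _ "min d1 d2"]) auto
    qed
  next
    case (Basis s)
    then obtain f A e where s: "s = basic_nbhd X f A e" "f \<in> Cfun X" "P A" by blast
    then show ?case using basic_nbhd_shrink[OF compact] by blast
  qed blast+
qed

lemma topspace_Ck [simp]: "topspace (Ck X) = Cfun X"
  unfolding Ck_eq_Cfun_topology by (rule topspace_Cfun_topology) simp

lemma topspace_Cp [simp]: "topspace (Cp X) = Cfun X"
  unfolding Cp_eq_Cfun_topology by (rule topspace_Cfun_topology) simp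

lemma openin_Ck_basic_nbhd:
  "f \<in> Cfun X \<Longrightarrow> compactin X A \<Longrightarrow> \<epsilon> > 0 \<Longrightarrow> openin (Ck X) (basic_nbhd X f A \<epsilon>)"
  unfolding Ck_eq_Cfun_topology by (rule openin_Cfun_topology_basic_nbhd)

lemma openin_Cp_basic_nbhd:
  "f \<in> Cfun X \<Longrightarrow> finite A \<Longrightarrow> A \<subseteq> topspace X \<Longrightarrow> \<epsilon> > 0 \<Longrightarrow> openin (Cp X) (basic_nbhd X f A \<epsilon>)"
  unfolding Cp_eq_Cfun_topology by (rule openin_Cfun_topology_basic_nbhd) auto

lemma openin_Ck_imp_basic_nbhd:
  "openin (Ck X) W \<Longrightarrow> g \<in> W \<Longrightarrow> \<exists>A d. compactin X A \<and> d > 0 \<and> basic_nbhd X g A d \<subseteq> W"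
  unfolding Ck_eq_Cfun_topology
  using openin_Cfun_topology_imp_basic_nbhd[of "compactin X" X W] by (auto intro: compactin_Un)

lemma openin_Cp_imp_basic_nbhd:
  "openin (Cp X) W \<Longrightarrow> g \<in> W \<Longrightarrow>
     \<exists>A d. finite A \<and> A \<subseteq> topspace X \<and> d > 0 \<and> basic_nbhd X g A d \<subseteq> W"
  unfolding Cp_eq_Cfun_topology
  using openin_Cfun_topology_imp_basic_nbhd[of "\<lambda>A. finite A \<and> A \<subseteq> topspace X" X W]
  by (auto intro: finite_imp_compactin)

lemma zero_fun_in_Cp_closure_iff:
  assumes "S \<subseteq> Cfun X"
  shows "zero_fun \<in> Cp X closure_of S \<longleftrightarrow>
     (\<forall>F d. finite F \<longrightarrow> F \<subseteq> topspace X \<longrightarrow> d > 0 \<longrightarrow> (\<exists>s\<in>S. \<forall>x\<in>F. \<bar>s x\<bar> < d))"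
proof
  assume z: "zero_fun \<in> Cp X closure_of S"
  show "\<forall>F d. finite F \<longrightarrow> F \<subseteq> topspace X \<longrightarrow> d > 0 \<longrightarrow> (\<exists>s\<in>S. \<forall>x\<in>F. \<bar>s x\<bar> < d)"
  proof (intro allI impI)
    fix F d assume F: "finite F" "F \<subseteq> topspace X" "(d::real) > 0"
    then have "openin (Cp X) (basic_nbhd X zero_fun F d)" "zero_fun \<in> basic_nbhd X zero_fun F d"
      by (simp_all add: openin_Cp_basic_nbhd center_in_basic_nbhd)
    then obtain s where "s \<in> S" "s \<in> basic_nbhd X zero_fun F d"
      using z unfolding in_closure_of by blast
    then show "\<exists>s\<in>S. \<forall>x\<in>F. \<bar>s x\<bar> < d" by (auto simp: mem_basic_nbhd)
  qed
next
  assume small: "\<forall>F d. finite F \<longrightarrow> F \<subseteq> topspace X \<longrightarrow> d > 0 \<longrightarrow> (\<exists>s\<in>S. \<forall>x\<in>F. \<bar>s x\<bar> < d)"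
  show "zero_fun \<in> Cp X closure_of S" unfolding in_closure_of
  proof (intro conjI allI impI)
    fix T assume "zero_fun \<in> T \<and> openin (Cp X) T"
    then obtain F d where F: "finite F" "F \<subseteq> topspace X" "d > 0" "basic_nbhd X zero_fun F d \<subseteq> T"
      using openin_Cp_imp_basic_nbhd[of X T zero_fun] by blast
    then obtain s where "s \<in> S" "\<forall>x\<in>F. \<bar>s x\<bar> < d" using small by meson
    then have "s \<in> basic_nbhd X zero_fun F d" using assms by (auto simp: mem_basic_nbhd)
    then show "\<exists>y. y \<in> S \<and> y \<in> T" using F(4) \<open>s \<in> S\<close> by blast
  qed simp
qed

lemma t1_space_Cp: "t1_space (Cp X)"
  unfolding t1_space_def topspace_Cp
proof (intro ballI impI)
  fix f g assume f: "f \<in> Cfun X" and g: "g \<in> Cfun X" and "f \<noteq> g"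
  then obtain x where x: "f x \<noteq> g x" by blast
  then have "x \<in> topspace X" using Cfun_outside[OF f] Cfun_outside[OF g] by metis
  then show "\<exists>U. openin (Cp X) U \<and> f \<in> U \<and> g \<notin> U"
    using x f by (intro exI[of _ "basic_nbhd X f {x} \<bar>f x - g x\<bar>"] conjI openin_Cp_basic_nbhd)
      (auto simp: basic_nbhd_def)
qed

lemma Tychonoff_space_imp_t1_space: "Tychonoff_space X \<Longrightarrow> t1_space X"
  unfolding Tychonoff_space_def using Hausdorff_imp_t1_space by blast

lemma Tychonoff_space_openin_delete: "Tychonoff_space X \<Longrightarrow> openin X U \<Longrightarrow> openin X (U - {x})"
  using Tychonoff_space_imp_t1_space t1_space_openin_delete_alt by blast

lemma Urysohn_compact_open:
  assumes "completely_regular_space X" "compactin X K" "openin X U" "K \<subseteq> U"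
  obtains \<phi> where "continuous_map X euclideanreal \<phi>" "\<forall>x\<in>K. \<phi> x = 0" "\<forall>x\<in>topspace X - U. \<phi> x = 1"
proof -
  have "closedin X (topspace X - U)" "disjnt (topspace X - U) K"
    using assms(3,4) by (auto simp: disjnt_def)
  then obtain \<phi> where "continuous_map X (subtopology euclidean {0..1::real}) \<phi>"
      "\<phi> ` K \<subseteq> {0}" "\<phi> ` (topspace X - U) \<subseteq> {1}"
    using Urysohn_completely_regular_closed_compact[of 0 1 X "topspace X - U" K] assms(1,2) by auto
  then show ?thesis by (intro that[of \<phi>]) (auto dest: continuous_map_into_fulltopology)
qed

lemma Cfun_agree_on_compact_large_outside:
  assumes "completely_regular_space X" "g \<in> Cfun X" "compactin X K" "openin X U" "K \<subseteq> U"
  shows "\<exists>h\<in>Cfun X. (\<forall>x\<in>K. h x = g x) \<and> (\<forall>y\<in>topspace X - U. c \<le> h y)"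
proof -
  obtain \<phi> where \<phi>: "continuous_map X euclideanreal \<phi>" "\<forall>x\<in>K. \<phi> x = 0" "\<forall>x\<in>topspace X - U. \<phi> x = 1"
    using Urysohn_compact_open[OF assms(1,3-5)] by blast
  define h where "h = zero_ext X (\<lambda>x. g x + \<phi> x * (c + \<bar>g x\<bar>))"
  have "h \<in> Cfun X"
    unfolding h_def using \<phi>(1) Cfun_continuous_map[OF assms(2)]
    by (intro zero_ext_in_Cfun continuous_intros)
  moreover have "\<forall>x\<in>K. h x = g x"
    using \<phi>(2) compactin_subset_topspace[OF assms(3)] unfolding h_def by auto
  moreover have "\<forall>y\<in>topspace X - U. c \<le> h y"
    using \<phi>(3) unfolding h_def by auto
  ultimately show ?thesis by blast
qed

lemma basic_nbhd_zero_subset_point_nbhd: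
  assumes X: "Tychonoff_space X" and K: "compactin X K" and y: "y \<in> topspace X" and "d > 0"
    and sub: "basic_nbhd X zero_fun K d \<subseteq> basic_nbhd X zero_fun {y} e"
  shows "y \<in> K" and "d \<le> e"
proof -
  show "y \<in> K"
  proof (rule ccontr)
    assume "y \<notin> K"
    then have "K \<subseteq> topspace X - {y}" using compactin_subset_topspace[OF K] by blast
    moreover have "completely_regular_space X" using X by (simp add: Tychonoff_space_def)
    ultimately obtain h where "h \<in> Cfun X" "\<forall>x\<in>K. h x = 0"
        "\<forall>z\<in>topspace X - (topspace X - {y}). e \<le> h z"
      using Cfun_agree_on_compact_large_outside[OF _ zero_fun_in_Cfun K
          Tychonoff_space_openin_delete[OF X openin_topspace]]
      by fastforce
    moreover from this have "h \<in> basic_nbhd X zero_fun K d"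
      using \<open>d > 0\<close> by (simp add: mem_basic_nbhd)
    ultimately show False using sub y by (force simp: mem_basic_nbhd)
  qed
  show "d \<le> e"
  proof (rule ccontr)
    assume "\<not> d \<le> e"
    define h where "h = zero_ext X (\<lambda>_. max e 0)"
    have "h \<in> Cfun X" unfolding h_def by (simp add: zero_ext_in_Cfun)
    moreover have "\<bar>h x\<bar> < d" for x
      using \<open>\<not> d \<le> e\<close> \<open>d > 0\<close> unfolding h_def zero_ext_def by auto
    ultimately have "h \<in> basic_nbhd X zero_fun K d" by (simp add: mem_basic_nbhd)
    then show False using sub y unfolding h_def by (force simp: mem_basic_nbhd)
  qed
qed

lemma closed_discrete_if_locally_finite:
  assumes t1: "t1_space Y" and S: "S \<subseteq> topspace Y"
    and lf: "\<And>y. y \<in> topspace Y \<Longrightarrow> \<exists>V. openin Y V \<and> y \<in> V \<and> finite (V \<inter> S)"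
  shows "S \<in> closed_discrete_sets Y"
proof -
  have isolated: "\<exists>V. openin Y V \<and> y \<in> V \<and> V \<inter> S \<subseteq> {y}" if y: "y \<in> topspace Y" for y
  proof -
    obtain V where V: "openin Y V" "y \<in> V" "finite (V \<inter> S)" using lf[OF y] by blast
    have "closedin Y (V \<inter> S - {y})"
      using t1 V(3) S unfolding t1_space_closedin_finite by auto
    then have "openin Y (V - (V \<inter> S - {y}))" using V(1) by (simp add: openin_diff)
    then show ?thesis using V(2) by (intro exI[of _ "V - (V \<inter> S - {y})"]) auto
  qed
  have "openin Y (topspace Y - S)"
  proof (subst openin_subopen, intro ballI)
    fix y assume "y \<in> topspace Y - S"
    then obtain V where "openin Y V" "y \<in> V" "V \<inter> S \<subseteq> {y}" using isolated by blast
    then show "\<exists>T. openin Y T \<and> y \<in> T \<and> T \<subseteq> topspace Y - S"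
      using \<open>y \<in> topspace Y - S\<close> openin_subset[of Y V] by (intro exI[of _ V]) auto
  qed
  moreover have "\<exists>U. openin Y U \<and> U \<inter> S = {s}" if "s \<in> S" for s
    using isolated[of s] S that by blast
  ultimately show ?thesis unfolding closed_discrete_sets_def closedin_def using S by blast
qed

definition escapes_on_finite_set :: "'a topology \<Rightarrow> (nat \<Rightarrow> 'a \<Rightarrow> real) \<Rightarrow> bool" where
  "escapes_on_finite_set X h \<longleftrightarrow>
     (\<exists>F. finite F \<and> F \<subseteq> topspace X \<and> (\<forall>n. \<exists>y\<in>F. real n + 1 \<le> h n y))"

lemma escapes_on_finite_set_not_clustering:
  assumes "\<forall>n. h n \<in> Cfun X" and "escapes_on_finite_set X h"
  shows "range h \<notin> clustering_sets (Cp X) zero_fun"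
proof
  assume "range h \<in> clustering_sets (Cp X) zero_fun"
  moreover have "range h \<subseteq> Cfun X" using assms(1) by auto
  ultimately have small: "\<forall>F d. finite F \<longrightarrow> F \<subseteq> topspace X \<longrightarrow> d > 0 \<longrightarrow> (\<exists>s\<in>range h. \<forall>x\<in>F. \<bar>s x\<bar> < d)"
    unfolding clustering_sets_def using zero_fun_in_Cp_closure_iff by blast
  obtain F where "finite F" "F \<subseteq> topspace X" and F: "\<forall>n. \<exists>y\<in>F. real n + 1 \<le> h n y"
    using assms(2) unfolding escapes_on_finite_set_def by blast
  then obtain n where small_n: "\<forall>y\<in>F. \<bar>h n y\<bar> < 1"
    using small[rule_format, of F 1] by auto
  obtain y where "y \<in> F" "real n + 1 \<le> h n y" using F by blast
  then show False using small_n by fastforce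
qed

lemma escapes_on_finite_set_closed_discrete:
  assumes h: "\<forall>n. h n \<in> Cfun X" and "escapes_on_finite_set X h"
  shows "range h \<in> closed_discrete_sets (Cp X)"
proof (rule closed_discrete_if_locally_finite[OF t1_space_Cp])
  show "range h \<subseteq> topspace (Cp X)" using h by auto
next
  obtain F where F: "finite F" "F \<subseteq> topspace X" "\<forall>n. \<exists>y\<in>F. real n + 1 \<le> h n y"
    using assms(2) unfolding escapes_on_finite_set_def by blast
  fix f assume "f \<in> topspace (Cp X)"
  then have f: "f \<in> Cfun X" by simp
  define M where "M = (\<Sum>y\<in>F. \<bar>f y\<bar>)"
  have fM: "\<forall>y\<in>F. \<bar>f y\<bar> \<le> M" unfolding M_def using F(1) by (auto intro: member_le_sum)
  define V where "V = basic_nbhd X f F 1"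
  have "V \<inter> range h \<subseteq> h ` {n. real n < M}"
  proof
    fix s assume "s \<in> V \<inter> range h"
    then obtain n where n: "s = h n" "h n \<in> V" by blast
    obtain y where y: "y \<in> F" "real n + 1 \<le> h n y" using F(3) by blast
    have "\<bar>f y - h n y\<bar> < 1" using n(2) y(1) unfolding V_def mem_basic_nbhd by blast
    then have "real n < M" using y fM by fastforce
    then show "s \<in> h ` {n. real n < M}" using n(1) by blast
  qed
  moreover have "finite {n. real n < M}"
    unfolding finite_nat_set_iff_bounded
    by (rule exI[of _ "nat \<lceil>M\<rceil>"]) (use real_nat_ceiling_ge[of M] in auto)
  ultimately have "finite (V \<inter> range h)" by (meson finite_imageI finite_subset)
  moreover have "openin (Cp X) V" "f \<in> V"
    unfolding V_def using f F by (simp_all add: openin_Cp_basic_nbhd center_in_basic_nbhd)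
  ultimately show "\<exists>V. openin (Cp X) V \<and> f \<in> V \<and> finite (V \<inter> range h)" by blast
qed

lemma zero_fun_in_Cp_closure_if_frequently_small:
  assumes h: "\<forall>n. h n \<in> Cfun X"
    and small: "\<And>F N. finite F \<Longrightarrow> F \<subseteq> topspace X \<Longrightarrow> \<exists>n\<ge>N. \<forall>y\<in>F. \<bar>h n y\<bar> < 1 / (real n + 1)"
  shows "zero_fun \<in> Cp X closure_of range h"
proof -
  have "range h \<subseteq> Cfun X" using h by auto
  moreover have "\<exists>s\<in>range h. \<forall>y\<in>F. \<bar>s y\<bar> < d" if F: "finite F" "F \<subseteq> topspace X" and "d > 0" for F d
  proof -
    obtain N :: nat where N: "inverse (real (Suc N)) < d" using reals_Archimedean \<open>d > 0\<close> by blast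
    obtain n where n: "n \<ge> N" "\<forall>y\<in>F. \<bar>h n y\<bar> < 1 / (real n + 1)" using small[OF F] by blast
    have "1 / (real n + 1) \<le> inverse (real (Suc N))" using n(1) by (simp add: divide_simps)
    then have "\<forall>y\<in>F. \<bar>h n y\<bar> < d" using n(2) N by fastforce
    then show ?thesis by blast
  qed
  ultimately show ?thesis by (simp add: zero_fun_in_Cp_closure_iff)
qed

section \<open>Covers and neighbourhoods of compact sets\<close>

lemma mem_nbhds_of_set [simp]: "U \<in> nbhds_of_set X K \<longleftrightarrow> openin X U \<and> U \<noteq> topspace X \<and> K \<subseteq> U"
  by (simp add: nbhds_of_set_def)

lemma nbhds_of_set_antimono: "K \<subseteq> L \<Longrightarrow> nbhds_of_set X L \<subseteq> nbhds_of_set X K"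
  unfolding nbhds_of_set_def by blast

lemma nbhds_of_set_in_nbhds_cpt: "compactin X K \<Longrightarrow> K \<noteq> {} \<Longrightarrow> nbhds_of_set X K \<in> nbhds_cpt X"
  unfolding nbhds_cpt_def cpt_sets_def by blast

lemma nbhds_cpt_kernel:
  obtains K where "\<And>N. N \<in> nbhds_cpt X \<Longrightarrow> compactin X (K N) \<and> K N \<noteq> {} \<and> N = nbhds_of_set X (K N)"
proof -
  have "\<forall>N\<in>nbhds_cpt X. \<exists>K. compactin X K \<and> K \<noteq> {} \<and> N = nbhds_of_set X K"
    unfolding nbhds_cpt_def cpt_sets_def by blast
  from bchoice[OF this] obtain K
    where "\<forall>N\<in>nbhds_cpt X. compactin X (K N) \<and> K N \<noteq> {} \<and> N = nbhds_of_set X (K N)"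
    by blast
  then show ?thesis using that by blast
qed

lemma nbhds_cpt_member: "N \<in> nbhds_cpt X \<Longrightarrow> U \<in> N \<Longrightarrow> openin X U \<and> U \<noteq> topspace X"
  unfolding nbhds_cpt_def by auto

lemma dual_families_nbhds_cpt_k_covers:
  assumes "topspace X \<noteq> {}"
  shows "dual_families (nbhds_cpt X) (k_covers X)"
proof
  fix U N assume "U \<in> k_covers X" "N \<in> nbhds_cpt X"
  moreover from this(2) obtain K where "compactin X K" "N = nbhds_of_set X K"
    unfolding nbhds_cpt_def cpt_sets_def by blast
  ultimately show "U \<inter> N \<noteq> {}" unfolding k_covers_def open_covers_def by fastforce
next
  fix f assume f: "\<forall>N\<in>nbhds_cpt X. f N \<in> N"
  have covers_compact: "\<exists>V\<in>f ` nbhds_cpt X. K \<subseteq> V" if "compactin X K" for K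
  proof -
    obtain p where "p \<in> topspace X" using assms by blast
    then have "compactin X (insert p K)" using compactin_Un[of X "{p}" K] that by simp
    then have N: "nbhds_of_set X (insert p K) \<in> nbhds_cpt X"
      by (simp add: nbhds_of_set_in_nbhds_cpt)
    then have "f (nbhds_of_set X (insert p K)) \<in> nbhds_of_set X (insert p K)" using f by blast
    then have "K \<subseteq> f (nbhds_of_set X (insert p K))" by simp
    then show ?thesis using N by blast
  qed
  have opens: "\<forall>V\<in>f ` nbhds_cpt X. openin X V \<and> V \<noteq> topspace X"
    using f nbhds_cpt_member by blast
  have "\<Union>(f ` nbhds_cpt X) = topspace X"
  proof
    show "\<Union>(f ` nbhds_cpt X) \<subseteq> topspace X" using opens openin_subset by blast
    show "topspace X \<subseteq> \<Union>(f ` nbhds_cpt X)"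
    proof
      fix y assume "y \<in> topspace X"
      then obtain V where "V \<in> f ` nbhds_cpt X" "{y} \<subseteq> V" using covers_compact[of "{y}"] by auto
      then show "y \<in> \<Union>(f ` nbhds_cpt X)" by blast
    qed
  qed
  then show "f ` nbhds_cpt X \<in> k_covers X"
    using opens covers_compact unfolding k_covers_def open_covers_def by blast
qed

lemma downward_directed_nbhds_cpt: "downward_directed (nbhds_cpt X)"
proof
  fix S assume S: "finite S" "S \<subseteq> nbhds_cpt X" "S \<noteq> {}"
  obtain K where K: "\<And>N. N \<in> nbhds_cpt X \<Longrightarrow> compactin X (K N) \<and> K N \<noteq> {} \<and> N = nbhds_of_set X (K N)"
    using nbhds_cpt_kernel by blast
  have "compactin X (\<Union>(K ` S))" by (rule compactin_Union) (use S K in auto)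
  moreover have "\<Union>(K ` S) \<noteq> {}" using S(2,3) K by fast
  ultimately have "nbhds_of_set X (\<Union>(K ` S)) \<in> nbhds_cpt X" by (rule nbhds_of_set_in_nbhds_cpt)
  moreover have "nbhds_of_set X (\<Union>(K ` S)) \<subseteq> N" if "N \<in> S" for N
  proof -
    have "nbhds_of_set X (\<Union>(K ` S)) \<subseteq> nbhds_of_set X (K N)"
      using that by (intro nbhds_of_set_antimono) auto
    also have "\<dots> = N" by (rule sym) (use K[of N] that S(2) in blast)
    finally show ?thesis .
  qed
  ultimately show "\<exists>M\<in>nbhds_cpt X. \<forall>N\<in>S. M \<subseteq> N" by blast
qed

lemma gamma_covers_subset_omega_covers: "gamma_covers X \<subseteq> omega_covers X"
proof
  fix \<U> assume \<U>: "\<U> \<in> gamma_covers X"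
  have "\<exists>U\<in>\<U>. F \<subseteq> U" if "finite F" "F \<subseteq> topspace X" for F
  proof -
    have "finite {U\<in>\<U>. \<not> F \<subseteq> U}" "infinite \<U>" using \<U> that unfolding gamma_covers_def by blast+
    then show ?thesis by (metis (mono_tags, lifting) finite_subset mem_Collect_eq subsetI)
  qed
  then show "\<U> \<in> omega_covers X" using \<U> unfolding gamma_covers_def omega_covers_def by blast
qed

lemma not_omega_cover_witness:
  fixes U :: "nat \<Rightarrow> 'a set"
  assumes U: "\<forall>n. openin X (U n) \<and> U n \<noteq> topspace X" and "range U \<notin> omega_covers X"
  shows "\<exists>F. finite F \<and> F \<subseteq> topspace X \<and> (\<forall>n. \<not> F \<subseteq> U n)"
proof (cases "\<Union>(range U) = topspace X")
  case True
  with assms show ?thesis unfolding omega_covers_def open_covers_def by fastforce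
next
  case False
  then obtain p where "p \<in> topspace X" "p \<notin> \<Union>(range U)" using U openin_subset by blast
  then show ?thesis by (intro exI[of _ "{p}"]) auto
qed

lemma omega_cover_frequently:
  fixes U :: "nat \<Rightarrow> 'a set"
  assumes U: "\<forall>n. U n \<noteq> topspace X" and "range U \<in> omega_covers X"
    and F: "finite F" "F \<subseteq> topspace X"
  shows "\<exists>n\<ge>N. F \<subseteq> U n"
proof -
  have "\<Union>(range U) = topspace X" using assms(2) by (simp add: omega_covers_def open_covers_def)
  then have "\<forall>n. U n \<subseteq> topspace X" by blast
  then have "\<forall>n. \<exists>p. p \<in> topspace X \<and> p \<notin> U n" using U by blast
  then obtain p where p: "\<forall>n. p n \<in> topspace X \<and> p n \<notin> U n" by metis
  \<comment> \<open>Adding the points \<open>p 0, \<dots>, p (N - 1)\<close> rules out the first \<open>N\<close> members.\<close>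
  have "finite (F \<union> p ` {..<N})" "F \<union> p ` {..<N} \<subseteq> topspace X"
    using F p by auto
  then obtain m where m: "F \<union> p ` {..<N} \<subseteq> U m" using assms(2) unfolding omega_covers_def by blast
  moreover have "m \<ge> N"
  proof (rule ccontr)
    assume "\<not> N \<le> m"
    then have "p m \<in> F \<union> p ` {..<N}" by simp
    then show False using m p by blast
  qed
  ultimately show ?thesis by blast
qed

lemma not_gamma_cover_misses_finite_set_infinitely_often:
  fixes x :: "nat \<Rightarrow> 'a set"
  assumes x: "\<forall>n. openin X (x n) \<and> x n \<noteq> topspace X" and "range x \<notin> gamma_covers X"
  shows "\<exists>F. finite F \<and> F \<subseteq> topspace X \<and> infinite {n. \<not> F \<subseteq> x n}"
proof (rule ccontr)
  assume "\<not> ?thesis"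
  then have fin: "finite {n. \<not> F \<subseteq> x n}" if "finite F" "F \<subseteq> topspace X" for F
    using that by blast
  have somewhere: "\<exists>n. F \<subseteq> x n" if "finite F" "F \<subseteq> topspace X" for F
  proof -
    have "{n. \<not> F \<subseteq> x n} \<noteq> UNIV" using fin[OF that] infinite_UNIV_nat by metis
    then show ?thesis by blast
  qed
  have cover: "\<Union>(range x) = topspace X"
  proof
    show "\<Union>(range x) \<subseteq> topspace X" using x openin_subset by blast
    show "topspace X \<subseteq> \<Union>(range x)"
    proof
      fix y assume "y \<in> topspace X"
      then obtain n where "{y} \<subseteq> x n" using somewhere[of "{y}"] by auto
      then show "y \<in> \<Union>(range x)" by blast
    qed
  qed
  have "infinite (range x)"
  proof
    assume "finite (range x)"
    moreover have "\<forall>U\<in>range x. \<exists>p. p \<in> topspace X \<and> p \<notin> U" using x openin_subset by blast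
    ultimately obtain p where p: "\<forall>U\<in>range x. p U \<in> topspace X \<and> p U \<notin> U" by metis
    then have "{n. \<not> p ` range x \<subseteq> x n} = UNIV" by blast
    then show False using fin[of "p ` range x"] \<open>finite (range x)\<close> p by auto
  qed
  moreover have "finite {U\<in>range x. \<not> F \<subseteq> U}" if "finite F" "F \<subseteq> topspace X" for F
    using finite_imageI[OF fin[OF that], of x] by (rule finite_subset[rotated]) auto
  ultimately have "range x \<in> gamma_covers X"
    using x cover unfolding gamma_covers_def open_covers_def by auto
  then show False using assms(2) by contradiction
qed

lemma not_gamma_cover_subsequence_not_omega_cover:
  fixes x :: "nat \<Rightarrow> 'a set"
  assumes "\<forall>n. openin X (x n) \<and> x n \<noteq> topspace X" and "range x \<notin> gamma_covers X"
  shows "\<exists>r :: nat \<Rightarrow> nat. strict_mono r \<and> range (x \<circ> r) \<notin> omega_covers X"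
proof -
  obtain F where F: "finite F" "F \<subseteq> topspace X" "infinite {n. \<not> F \<subseteq> x n}"
    using not_gamma_cover_misses_finite_set_infinitely_often[OF assms] by blast
  then obtain r :: "nat \<Rightarrow> nat" where "strict_mono r" "\<forall>n. r n \<in> {n. \<not> F \<subseteq> x n}"
    using infinite_enumerate by blast
  moreover from this(2) have "range (x \<circ> r) \<notin> omega_covers X"
    using F(1,2) unfolding omega_covers_def by auto
  ultimately show ?thesis by blast
qed

section \<open>Translating plays between \<open>X\<close> and \<open>C\<^sub>k(X)\<close>\<close>

lemma game_le_II_restrict_moves: "E' \<subseteq> E \<Longrightarrow> game_le_II (E, P) (E', P)"
  by (rule game_translation.game_le_II[of _ _ "\<lambda>n E. E" "\<lambda>n f E. f"], unfold_locales) auto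

lemma openin_Ck_agree_on_compact:
  assumes "topspace X \<noteq> {}" "openin (Ck X) W" "g \<in> W"
  shows "\<exists>K. compactin X K \<and> K \<noteq> {} \<and> (\<forall>h\<in>Cfun X. (\<forall>x\<in>K. h x = g x) \<longrightarrow> h \<in> W)"
proof -
  obtain A d where A: "compactin X A" "d > 0" "basic_nbhd X g A d \<subseteq> W"
    using openin_Ck_imp_basic_nbhd[OF assms(2,3)] by blast
  obtain p where p: "p \<in> topspace X" using assms(1) by blast
  have "compactin X (insert p A)" using compactin_Un[of X "{p}" A] A(1) p by simp
  moreover have "\<forall>h\<in>Cfun X. (\<forall>x\<in>insert p A. h x = g x) \<longrightarrow> h \<in> W"
    using A(2,3) by (auto simp: mem_basic_nbhd)
  ultimately show ?thesis by blast
qed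

lemma nonempty_opens_Ck_centers:
  assumes "topspace X \<noteq> {}"
  obtains g K where "\<And>W. W \<in> nonempty_opens (Ck X) \<Longrightarrow> g W \<in> W \<and> compactin X (K W) \<and>
    K W \<noteq> {} \<and> (\<forall>h\<in>Cfun X. (\<forall>x\<in>K W. h x = g W x) \<longrightarrow> h \<in> W)"
proof -
  have "\<forall>W\<in>nonempty_opens (Ck X). \<exists>g K. g \<in> W \<and> compactin X K \<and> K \<noteq> {} \<and>
      (\<forall>h\<in>Cfun X. (\<forall>x\<in>K. h x = g x) \<longrightarrow> h \<in> W)"
  proof
    fix W assume "W \<in> nonempty_opens (Ck X)"
    then obtain g where g: "openin (Ck X) W" "g \<in> W" unfolding nonempty_opens_def by blast
    then show "\<exists>g K. g \<in> W \<and> compactin X K \<and> K \<noteq> {} \<and>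
        (\<forall>h\<in>Cfun X. (\<forall>x\<in>K. h x = g x) \<longrightarrow> h \<in> W)"
      using openin_Ck_agree_on_compact[OF assms g] by blast
  qed
  then show ?thesis using that by metis
qed

lemma Cfun_agree_on_compact_large_outside_choice:
  assumes "completely_regular_space X"
  obtains lift where "\<And>g K U c. g \<in> Cfun X \<Longrightarrow> compactin X K \<Longrightarrow> openin X U \<Longrightarrow> K \<subseteq> U \<Longrightarrow>
    lift g K U c \<in> Cfun X \<and> (\<forall>x\<in>K. lift g K U c x = g x) \<and> (\<forall>y\<in>topspace X - U. c \<le> lift g K U c y)"
  using Cfun_agree_on_compact_large_outside[OF assms] that by metis

text \<open>One's move \<open>W\<close> is answered by \<open>\<N>(K)\<close> in \<open>G\<^sub>1(\<N>[K(X)], \<not>\<Omega>\<^sub>X)\<close>, and the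
  neighbourhood \<open>U\<close> chosen there by a function agreeing on \<open>K\<close> with a member of \<open>W\<close> and
  exceeding \<open>n + 1\<close> off \<open>U\<close>.\<close>
lemma game_le_II_nbhds_cpt_nonempty_opens_Ck:
  assumes X: "Tychonoff_space X" "topspace X \<noteq> {}"
    and escape: "\<And>h. \<forall>n. h n \<in> Cfun X \<Longrightarrow> escapes_on_finite_set X h \<Longrightarrow> P h"
  shows "game_le_II (G1_neg (nbhds_cpt X) (omega_covers X)) (nonempty_opens (Ck X), P)"
proof -
  obtain g K where gK: "\<And>W. W \<in> nonempty_opens (Ck X) \<Longrightarrow> g W \<in> W \<and> compactin X (K W) \<and>
      K W \<noteq> {} \<and> (\<forall>h\<in>Cfun X. (\<forall>x\<in>K W. h x = g W x) \<longrightarrow> h \<in> W)"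
    using nonempty_opens_Ck_centers[OF X(2)] by blast
  have g: "g W \<in> Cfun X" if "W \<in> nonempty_opens (Ck X)" for W
    using gK[OF that] openin_subset[of "Ck X" W] that unfolding nonempty_opens_def by auto
  obtain lift where lift: "\<And>g K U c. g \<in> Cfun X \<Longrightarrow> compactin X K \<Longrightarrow> openin X U \<Longrightarrow> K \<subseteq> U \<Longrightarrow>
      lift g K U c \<in> Cfun X \<and> (\<forall>x\<in>K. lift g K U c x = g x) \<and> (\<forall>y\<in>topspace X - U. c \<le> lift g K U c y)"
    using Cfun_agree_on_compact_large_outside_choice X(1) unfolding Tychonoff_space_def by blast
  define answer where "answer n U W = lift (g W) (K W) U (real n + 1)" for n U W
  have answer: "answer n U W \<in> Cfun X \<and> (\<forall>x\<in>K W. answer n U W x = g W x) \<and>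
      (\<forall>y\<in>topspace X - U. real n + 1 \<le> answer n U W y)"
    if "W \<in> nonempty_opens (Ck X)" "U \<in> nbhds_of_set X (K W)" for n U W
    unfolding answer_def using that lift g gK by simp
  show ?thesis
  proof (rule game_translation.game_le_II[of _ _ "\<lambda>n W. nbhds_of_set X (K W)" answer],
      unfold_locales, unfold fst_conv snd_conv fst_G1_neg snd_G1_neg)
    fix n W assume "W \<in> nonempty_opens (Ck X)"
    then show "nbhds_of_set X (K W) \<in> nbhds_cpt X" using gK nbhds_of_set_in_nbhds_cpt by blast
  next
    fix n W U assume "W \<in> nonempty_opens (Ck X)" "U \<in> nbhds_of_set X (K W)"
    then show "answer n U W \<in> W" using gK answer by simp
  next
    fix Ws :: "nat \<Rightarrow> ('a \<Rightarrow> real) set" and Us :: "nat \<Rightarrow> 'a set"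
    assume Ws: "\<forall>n. Ws n \<in> nonempty_opens (Ck X)" and Us: "\<forall>n. Us n \<in> nbhds_of_set X (K (Ws n))"
      and "range Us \<notin> omega_covers X"
    then obtain F where F: "finite F" "F \<subseteq> topspace X" "\<forall>n. \<not> F \<subseteq> Us n"
      using not_omega_cover_witness[of X Us] by auto
    have "\<exists>y\<in>F. real n + 1 \<le> answer n (Us n) (Ws n) y" for n
      using answer[OF Ws[rule_format] Us[rule_format]] F(2,3) by blast
    then have "escapes_on_finite_set X (\<lambda>n. answer n (Us n) (Ws n))"
      unfolding escapes_on_finite_set_def using F(1,2) by blast
    then show "P (\<lambda>n. answer n (Us n) (Ws n))" using escape answer Ws Us by simp
  qed
qed

lemma openin_abs_less_Cfun: "f \<in> Cfun X \<Longrightarrow> openin X {x \<in> topspace X. \<bar>f x\<bar> < r}"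
  using openin_continuous_map_preimage[of X euclideanreal "\<lambda>x. \<bar>f x\<bar>" "{..<r}"]
  by (simp add: Cfun_continuous_map continuous_intros)

lemma nbhds_cpt_kernel_outside_point:
  assumes "\<not> compactin X (topspace X)"
  obtains K p
  where "\<And>N. N \<in> nbhds_cpt X \<Longrightarrow> compactin X (K N) \<and> K N \<noteq> {} \<and> N = nbhds_of_set X (K N)"
    and "\<And>N. N \<in> nbhds_cpt X \<Longrightarrow> p N \<in> topspace X - K N"
proof -
  obtain K where K: "\<And>N. N \<in> nbhds_cpt X \<Longrightarrow> compactin X (K N) \<and> K N \<noteq> {} \<and> N = nbhds_of_set X (K N)"
    using nbhds_cpt_kernel by blast
  have "\<exists>p. p \<in> topspace X - K N" if "N \<in> nbhds_cpt X" for N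
  proof -
    have "K N \<subseteq> topspace X" "K N \<noteq> topspace X"
      using K[OF that] assms compactin_subset_topspace by metis+
    then show ?thesis by blast
  qed
  then obtain p where "\<And>N. N \<in> nbhds_cpt X \<Longrightarrow> p N \<in> topspace X - K N" by metis
  with K show ?thesis by (rule that)
qed

locale Ck_shrinking_moves =
  fixes X :: "'a topology" and G :: "('a \<Rightarrow> real) game"
    and move :: "nat \<Rightarrow> 'a set \<Rightarrow> ('a \<Rightarrow> real) set"
  assumes move_legal: "\<And>n K. compactin X K \<Longrightarrow> K \<noteq> {} \<Longrightarrow> move n K \<in> fst G"
    and move_small: "\<And>n K f. compactin X K \<Longrightarrow> K \<noteq> {} \<Longrightarrow> f \<in> move n K \<Longrightarrow>
      f \<in> Cfun X \<and> (\<forall>x\<in>K. \<bar>f x\<bar> < 1 / (real n + 1))"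
    and clustering_loses: "\<And>Ks f. \<forall>n. compactin X (Ks n) \<and> Ks n \<noteq> {} \<Longrightarrow> \<forall>n. f n \<in> move n (Ks n) \<Longrightarrow>
      zero_fun \<in> Cp X closure_of range f \<Longrightarrow> \<not> snd G f"
begin

lemma I_pre_wins_if_compact:
  assumes "compactin X (topspace X)" "topspace X \<noteq> {}"
  shows "I_pre_wins G"
  unfolding I_pre_wins_def
proof (intro exI[of _ "\<lambda>n. move n (topspace X)"] conjI allI impI)
  fix n show "move n (topspace X) \<in> fst G" using move_legal assms by blast
next
  fix f assume f: "\<forall>n. f n \<in> move n (topspace X)"
  then have "zero_fun \<in> Cp X closure_of range f"
    using move_small[OF assms] by (intro zero_fun_in_Cp_closure_if_frequently_small) blast+
  then show "\<not> snd G f" using clustering_loses[of "\<lambda>_. topspace X"] f assms by blast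
qed

text \<open>One's move \<open>\<N>(K)\<close> is answered by \<open>move n K\<close> in \<open>G\<close>, and the function \<open>f\<close> chosen
  there by the open set where \<open>f\<close> is small, minus a point outside \<open>K\<close> (which exists as \<open>X\<close>
  is not compact) to make it a proper subset.\<close>
lemma game_le_II_nbhds_cpt:
  assumes X: "Tychonoff_space X" and noncompact: "\<not> compactin X (topspace X)"
  shows "game_le_II G (G1_neg (nbhds_cpt X) (omega_covers X))"
proof -
  obtain K p
    where K: "\<And>N. N \<in> nbhds_cpt X \<Longrightarrow> compactin X (K N) \<and> K N \<noteq> {} \<and> N = nbhds_of_set X (K N)"
      and p: "\<And>N. N \<in> nbhds_cpt X \<Longrightarrow> p N \<in> topspace X - K N"
    using nbhds_cpt_kernel_outside_point[OF noncompact] by blast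
  define small where "small n f = {x \<in> topspace X. \<bar>f x\<bar> < 1 / (real n + 1)}" for n f
  show ?thesis
  proof (rule game_translation.game_le_II[of _ _ "\<lambda>n N. move n (K N)" "\<lambda>n f N. small n f - {p N}"],
      unfold_locales, unfold fst_conv snd_conv fst_G1_neg snd_G1_neg)
    fix n N assume "N \<in> nbhds_cpt X"
    then show "move n (K N) \<in> fst G" using K move_legal by blast
  next
    fix n N f assume N: "N \<in> nbhds_cpt X" and f: "f \<in> move n (K N)"
    then have f_small: "f \<in> Cfun X" "\<forall>x\<in>K N. \<bar>f x\<bar> < 1 / (real n + 1)" using K move_small by blast+
    have "openin X (small n f - {p N})"
      unfolding small_def by (intro Tychonoff_space_openin_delete[OF X] openin_abs_less_Cfun f_small)
    moreover have "K N \<subseteq> small n f - {p N}"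
      using f_small(2) K[OF N] p[OF N] compactin_subset_topspace unfolding small_def by blast
    moreover have "small n f - {p N} \<noteq> topspace X" using p[OF N] by blast
    ultimately have "small n f - {p N} \<in> nbhds_of_set X (K N)" by simp
    then show "small n f - {p N} \<in> N" using K[OF N] by metis
  next
    fix Ns :: "nat \<Rightarrow> 'a set set" and f :: "nat \<Rightarrow> 'a \<Rightarrow> real"
    assume Ns: "\<forall>n. Ns n \<in> nbhds_cpt X" and f: "\<forall>n. f n \<in> move n (K (Ns n))" and "snd G f"
    show "range (\<lambda>n. small n (f n) - {p (Ns n)}) \<notin> omega_covers X"
    proof
      assume \<omega>: "range (\<lambda>n. small n (f n) - {p (Ns n)}) \<in> omega_covers X"
      have proper: "\<forall>n. small n (f n) - {p (Ns n)} \<noteq> topspace X" using p Ns by blast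
      have "\<exists>n\<ge>M. \<forall>y\<in>F. \<bar>f n y\<bar> < 1 / (real n + 1)" if F: "finite F" "F \<subseteq> topspace X" for F M
      proof -
        obtain n where "n \<ge> M" "F \<subseteq> small n (f n) - {p (Ns n)}"
          using omega_cover_frequently[OF proper \<omega> F] by blast
        then show ?thesis unfolding small_def by blast
      qed
      moreover have "\<forall>n. f n \<in> Cfun X" using f Ns K move_small by blast
      ultimately have "zero_fun \<in> Cp X closure_of range f"
        by (intro zero_fun_in_Cp_closure_if_frequently_small)
      then show False using clustering_loses[of "\<lambda>n. K (Ns n)"] f Ns K \<open>snd G f\<close> by blast
    qed
  qed
qed

end

lemma Ck_shrinking_moves_nbhds_zero:
  "Ck_shrinking_moves X (G1_neg (nbhds_pt (Ck X) zero_fun) (clustering_sets (Cp X) zero_fun))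
     (\<lambda>n K. basic_nbhd X zero_fun K (1 / (real n + 1)))"
proof
  fix n K assume "compactin X K"
  then show "basic_nbhd X zero_fun K (1 / (real n + 1))
      \<in> fst (G1_neg (nbhds_pt (Ck X) zero_fun) (clustering_sets (Cp X) zero_fun))"
    by (simp add: nbhds_pt_def openin_Ck_basic_nbhd center_in_basic_nbhd)
next
  fix n K f assume "f \<in> basic_nbhd X zero_fun K (1 / (real n + 1))"
  then show "f \<in> Cfun X \<and> (\<forall>x\<in>K. \<bar>f x\<bar> < 1 / (real n + 1))" by (simp add: mem_basic_nbhd)
next
  fix Ks and f :: "nat \<Rightarrow> 'a \<Rightarrow> real"
  assume "\<forall>n. f n \<in> basic_nbhd X zero_fun (Ks n) (1 / (real n + 1))"
    and "zero_fun \<in> Cp X closure_of range f"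
  then show "\<not> snd (G1_neg (nbhds_pt (Ck X) zero_fun) (clustering_sets (Cp X) zero_fun)) f"
    by (auto simp: clustering_sets_def mem_basic_nbhd)
qed

lemma basic_nbhd_const_positive:
  assumes "f \<in> basic_nbhd X (zero_ext X (\<lambda>_. c)) K c" "K \<subseteq> topspace X" "x \<in> K"
  shows "0 < f x \<and> f x < 2 * c"
proof -
  have "\<bar>zero_ext X (\<lambda>_. c) x - f x\<bar> < c" using assms(1,3) by (simp add: mem_basic_nbhd)
  then show ?thesis using assms(2,3) by auto
qed

text \<open>One's moves are neighbourhoods of the constant \<open>c = 1 / (2 (n + 1))\<close>, so Two's picks are
  positive on a nonempty set and \<open>0\<close> is not among them.\<close>
lemma Ck_shrinking_moves_opens_discrete:
  "Ck_shrinking_moves X (G1 (nonempty_opens (Ck X)) (closed_discrete_sets (Cp X)))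
     (\<lambda>n K. basic_nbhd X (zero_ext X (\<lambda>_. 1 / (2 * real n + 2))) K (1 / (2 * real n + 2)))"
proof -
  have positive_small: "0 < f x \<and> \<bar>f x\<bar> < 1 / (real n + 1)"
    if "f \<in> basic_nbhd X (zero_ext X (\<lambda>_. 1 / (2 * real n + 2))) K (1 / (2 * real n + 2))"
      and "compactin X K" "x \<in> K" for f n K x
  proof -
    have "2 * (1 / (2 * real n + 2)) = 1 / (real n + 1)" by (simp add: field_simps)
    then show ?thesis
      using basic_nbhd_const_positive[OF that(1) compactin_subset_topspace[OF that(2)] that(3)]
      by simp
  qed
  show ?thesis
  proof
    fix n K assume "compactin X K"
    moreover have c: "zero_ext X (\<lambda>_. 1 / (2 * real n + 2)) \<in> Cfun X"
      by (simp add: zero_ext_in_Cfun)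
    ultimately show "basic_nbhd X (zero_ext X (\<lambda>_. 1 / (2 * real n + 2))) K (1 / (2 * real n + 2))
        \<in> fst (G1 (nonempty_opens (Ck X)) (closed_discrete_sets (Cp X)))"
      using center_in_basic_nbhd[OF c, of "1 / (2 * real n + 2)"]
      by (auto simp: nonempty_opens_def intro!: openin_Ck_basic_nbhd)
  next
    fix n K f assume "compactin X K"
      and f: "f \<in> basic_nbhd X (zero_ext X (\<lambda>_. 1 / (2 * real n + 2))) K (1 / (2 * real n + 2))"
    then show "f \<in> Cfun X \<and> (\<forall>x\<in>K. \<bar>f x\<bar> < 1 / (real n + 1))"
      using positive_small[OF f] basic_nbhd_subset_Cfun by blast
  next
    fix Ks and f :: "nat \<Rightarrow> 'a \<Rightarrow> real"
    assume Ks: "\<forall>n. compactin X (Ks n) \<and> Ks n \<noteq> {}"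
      and f: "\<forall>n. f n \<in> basic_nbhd X (zero_ext X (\<lambda>_. 1 / (2 * real n + 2))) (Ks n)
        (1 / (2 * real n + 2))"
      and zero: "zero_fun \<in> Cp X closure_of range f"
    show "\<not> snd (G1 (nonempty_opens (Ck X)) (closed_discrete_sets (Cp X))) f"
    proof
      assume "snd (G1 (nonempty_opens (Ck X)) (closed_discrete_sets (Cp X))) f"
      then have "closedin (Cp X) (range f)" by (simp add: closed_discrete_sets_def)
      then have "zero_fun \<in> range f" using zero closure_of_closedin by metis
      then obtain n where "f n = zero_fun" by (metis rangeE)
      moreover obtain x where "x \<in> Ks n" using Ks by blast
      ultimately show False using positive_small[OF f[rule_format] _ \<open>x \<in> Ks n\<close>] Ks by simp
    qed
  qed
qed

lemma I_pre_wins_nbhds_cpt_if_compact: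
  assumes "compactin X (topspace X)" "topspace X \<noteq> {}"
  shows "I_pre_wins (G1_neg (nbhds_cpt X) (omega_covers X))"
proof -
  \<comment> \<open>No proper open set contains \<open>X\<close>, so One can play the empty family \<open>\<N>(X)\<close>.\<close>
  have "nbhds_of_set X (topspace X) \<in> nbhds_cpt X"
    using assms by (rule nbhds_of_set_in_nbhds_cpt)
  moreover have "nbhds_of_set X (topspace X) = {}"
    unfolding nbhds_of_set_def using openin_subset by blast
  ultimately show ?thesis unfolding I_pre_wins_def
    by (intro exI[of _ "\<lambda>n. nbhds_of_set X (topspace X)"]) auto
qed

lemma game_equiv_nbhds_cpt_Ck_games:
  assumes X: "Tychonoff_space X" "topspace X \<noteq> {}"
  defines "A1 \<equiv> G1_neg (nbhds_cpt X) (omega_covers X)"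
    and "A2 \<equiv> G1_neg (nbhds_pt (Ck X) zero_fun) (clustering_sets (Cp X) zero_fun)"
    and "A3 \<equiv> G1 (nonempty_opens (Ck X)) (closed_discrete_sets (Cp X))"
    and "A3' \<equiv> G1_neg (nonempty_opens (Ck X)) (clustering_sets (Cp X) zero_fun)"
  shows "game_equiv A1 A2" and "game_equiv A1 A3" and "game_equiv A1 A3'"
proof -
  have "game_le_II A1 A3"
    unfolding A1_def A3_def G1_def[of "nonempty_opens (Ck X)"]
    by (rule game_le_II_nbhds_cpt_nonempty_opens_Ck[OF X escapes_on_finite_set_closed_discrete])
  moreover have "game_le_II A1 A3'"
    unfolding A1_def A3'_def G1_neg_def[of "nonempty_opens (Ck X)"]
    by (rule game_le_II_nbhds_cpt_nonempty_opens_Ck[OF X escapes_on_finite_set_not_clustering])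
  moreover have "game_le_II A3' A2"
    unfolding A3'_def A2_def G1_neg_def
    by (rule game_le_II_restrict_moves) (auto simp: nbhds_pt_def nonempty_opens_def)
  moreover have "game_le_II A2 A1 \<and> game_le_II A3 A1"
  proof (cases "compactin X (topspace X)")
    case True
    then show ?thesis
      unfolding A1_def A2_def A3_def using X(2)
      by (intro conjI game_le_II_if_I_pre_wins I_pre_wins_nbhds_cpt_if_compact
          Ck_shrinking_moves.I_pre_wins_if_compact[OF Ck_shrinking_moves_nbhds_zero]
          Ck_shrinking_moves.I_pre_wins_if_compact[OF Ck_shrinking_moves_opens_discrete])
  next
    case False
    then show ?thesis
      unfolding A1_def A2_def A3_def
      by (intro conjI Ck_shrinking_moves.game_le_II_nbhds_cpt[OF Ck_shrinking_moves_nbhds_zero X(1)]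
          Ck_shrinking_moves.game_le_II_nbhds_cpt[OF Ck_shrinking_moves_opens_discrete X(1)])
  qed
  ultimately show "game_equiv A1 A2" "game_equiv A1 A3" "game_equiv A1 A3'"
    unfolding game_equiv_def by (meson game_le_II_trans)+
qed

section \<open>Predetermined strategies and cofinality\<close>

lemma sigma_compact_space_exhaustion:
  assumes "sigma_compact_space X"
  shows "\<exists>K :: nat \<Rightarrow> 'a set. (\<forall>n. compactin X (K n)) \<and>
    (\<forall>F. finite F \<and> F \<subseteq> topspace X \<longrightarrow> (\<exists>n. F \<subseteq> K n))"
proof -
  obtain L :: "nat \<Rightarrow> 'a set" where L: "\<forall>n. compactin X (L n)" "\<Union>(range L) = topspace X"
    using assms unfolding sigma_compact_space_def by blast
  define K where "K n = \<Union>(L ` {..n})" for n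
  have "compactin X (K n)" for n unfolding K_def using L(1) by (intro compactin_Union) auto
  moreover have "\<exists>n. F \<subseteq> K n" if F: "finite F" "F \<subseteq> topspace X" for F
  proof -
    obtain m where m: "\<forall>y\<in>F. y \<in> L (m y)" using F(2) L(2) by (metis UN_E subsetD)
    have "F \<subseteq> K (\<Sum>y\<in>F. m y)"
      using m F(1) unfolding K_def by (force intro: member_le_sum)
    then show ?thesis by blast
  qed
  ultimately show ?thesis by blast
qed

lemma I_pre_wins_nbhds_cpt_if_sigma_compact:
  assumes "topspace X \<noteq> {}" and "sigma_compact_space X"
  shows "I_pre_wins (G1_neg (nbhds_cpt X) (omega_covers X))"
proof -
  from sigma_compact_space_exhaustion[OF assms(2)] obtain K :: "nat \<Rightarrow> 'a set"
    where K: "\<forall>n. compactin X (K n)" "\<forall>F. finite F \<and> F \<subseteq> topspace X \<longrightarrow> (\<exists>n. F \<subseteq> K n)"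
    by blast
  obtain p where p: "p \<in> topspace X" using assms(1) by blast
  \<comment> \<open>The point \<open>p\<close> only makes the compact sets nonempty.\<close>
  define Es where "Es n = nbhds_of_set X (insert p (K n))" for n
  have "Es n \<in> nbhds_cpt X" for n
    unfolding Es_def using compactin_Un[of X "{p}" "K n"] K(1) p
    by (intro nbhds_of_set_in_nbhds_cpt) auto
  moreover have "range U \<in> omega_covers X" if U: "\<forall>n. U n \<in> Es n" for U
  proof -
    have U': "\<forall>n. openin X (U n) \<and> U n \<noteq> topspace X \<and> K n \<subseteq> U n" using U unfolding Es_def by simp
    have contains: "\<exists>V\<in>range U. F \<subseteq> V" if F: "finite F" "F \<subseteq> topspace X" for F
    proof -
      obtain n where "F \<subseteq> K n" using K(2) F by blast
      then have "F \<subseteq> U n" using U' by blast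
      then show ?thesis by blast
    qed
    have "\<Union>(range U) = topspace X"
    proof
      show "\<Union>(range U) \<subseteq> topspace X" using U' openin_subset by blast
      show "topspace X \<subseteq> \<Union>(range U)"
      proof
        fix y assume "y \<in> topspace X"
        then obtain V where "V \<in> range U" "{y} \<subseteq> V" using contains[of "{y}"] by auto
        then show "y \<in> \<Union>(range U)" by blast
      qed
    qed
    then show ?thesis using U' contains unfolding omega_covers_def open_covers_def by auto
  qed
  ultimately show ?thesis
    unfolding I_pre_wins_def by (intro exI[of _ Es]) simp
qed

lemma sigma_compact_if_I_pre_wins_nbhds_cpt:
  assumes X: "Tychonoff_space X" and "I_pre_wins (G1_neg (nbhds_cpt X) (omega_covers X))"
  shows "sigma_compact_space X"
proof -
  obtain Es :: "nat \<Rightarrow> 'a set set" where Es: "\<forall>n. Es n \<in> nbhds_cpt X"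
    "\<forall>U. (\<forall>n. U n \<in> Es n) \<longrightarrow> range U \<in> omega_covers X"
    using assms(2) unfolding I_pre_wins_def by auto
  obtain K where K: "\<And>N. N \<in> nbhds_cpt X \<Longrightarrow> compactin X (K N) \<and> K N \<noteq> {} \<and> N = nbhds_of_set X (K N)"
    using nbhds_cpt_kernel by blast
  \<comment> \<open>For a point \<open>y\<close> outside all kernels, Two could play \<open>X - {y}\<close> in every inning.\<close>
  have "y \<in> \<Union>(range (K \<circ> Es))" if y: "y \<in> topspace X" for y
  proof (rule ccontr)
    assume y_out: "y \<notin> \<Union>(range (K \<circ> Es))"
    have "\<forall>n. topspace X - {y} \<in> Es n"
      using K Es(1) y y_out compactin_subset_topspace
        Tychonoff_space_openin_delete[OF X openin_topspace] by fastforce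
    then have "range (\<lambda>n::nat. topspace X - {y}) \<in> omega_covers X"
      using Es(2)[THEN spec[of _ "\<lambda>n. topspace X - {y}"]] by blast
    then show False using y unfolding omega_covers_def open_covers_def by auto
  qed
  then have "\<Union>(range (K \<circ> Es)) = topspace X"
    using K Es(1) compactin_subset_topspace by fastforce
  then show "sigma_compact_space X"
    unfolding sigma_compact_space_def using K Es(1) by (intro exI[of _ "K \<circ> Es"]) auto
qed

lemma I_pre_wins_nbhds_cpt_iff_sigma_compact:
  assumes "Tychonoff_space X" "topspace X \<noteq> {}"
  shows "I_pre_wins (G1_neg (nbhds_cpt X) (omega_covers X)) \<longleftrightarrow> sigma_compact_space X"
  using I_pre_wins_nbhds_cpt_if_sigma_compact[OF assms(2)] sigma_compact_if_I_pre_wins_nbhds_cpt[OF assms(1)]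
  by blast

lemma nbhds_pt_Ck_zero_basic_nbhds:
  assumes "\<A> \<subseteq> nbhds_pt (Ck X) zero_fun"
  shows "\<exists>K d. \<forall>E\<in>\<A>. compactin X (K E) \<and> d E > 0 \<and> basic_nbhd X zero_fun (K E) (d E) \<subseteq> E"
proof -
  have "\<forall>E\<in>\<A>. \<exists>K d. compactin X K \<and> d > 0 \<and> basic_nbhd X zero_fun K d \<subseteq> E"
    using assms openin_Ck_imp_basic_nbhd unfolding nbhds_pt_def by blast
  then show ?thesis by metis
qed

lemma basic_nbhd_in_nbhds_pt_Cp:
  "finite A \<Longrightarrow> A \<subseteq> topspace X \<Longrightarrow> \<epsilon> > 0 \<Longrightarrow> basic_nbhd X zero_fun A \<epsilon> \<in> nbhds_pt (Cp X) zero_fun"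
  by (simp add: nbhds_pt_def openin_Cp_basic_nbhd center_in_basic_nbhd)

lemma countable_cofinal_if_sigma_compact:
  assumes "sigma_compact_space X"
  shows "\<exists>\<A>. countable \<A> \<and> cofinal_family (nbhds_pt (Ck X) zero_fun) (nbhds_pt (Cp X) zero_fun) \<A>"
proof -
  from sigma_compact_space_exhaustion[OF assms] obtain K :: "nat \<Rightarrow> 'a set"
    where K: "\<forall>n. compactin X (K n)" "\<forall>F. finite F \<and> F \<subseteq> topspace X \<longrightarrow> (\<exists>n. F \<subseteq> K n)"
    by blast
  define \<A> where "\<A> = (\<lambda>(n, m). basic_nbhd X zero_fun (K n) (1 / (real m + 1))) ` UNIV"
  have "\<A> \<subseteq> nbhds_pt (Ck X) zero_fun"
    unfolding \<A>_def using K(1)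
    by (auto simp: nbhds_pt_def openin_Ck_basic_nbhd center_in_basic_nbhd)
  moreover have "\<exists>E\<in>\<A>. E \<subseteq> W" if "W \<in> nbhds_pt (Cp X) zero_fun" for W
  proof -
    have W: "openin (Cp X) W" "zero_fun \<in> W" using that by (simp_all add: nbhds_pt_def)
    obtain A d where A: "finite A" "A \<subseteq> topspace X" "d > 0" "basic_nbhd X zero_fun A d \<subseteq> W"
      using openin_Cp_imp_basic_nbhd[OF W] by blast
    obtain m :: nat where "inverse (real (Suc m)) < d"
      using reals_Archimedean A(3) by blast
    then have "1 / (real m + 1) < d" by (simp add: inverse_eq_divide add.commute)
    moreover obtain n where "A \<subseteq> K n" using K(2) A(1,2) by blast
    ultimately have "basic_nbhd X zero_fun (K n) (1 / (real m + 1)) \<subseteq> W"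
      using A(4) basic_nbhd_mono[of A "K n" "1 / (real m + 1)" d X zero_fun] by simp
    then show ?thesis unfolding \<A>_def by blast
  qed
  ultimately have "cofinal_family (nbhds_pt (Ck X) zero_fun) (nbhds_pt (Cp X) zero_fun) \<A>"
    unfolding cofinal_family_def by blast
  moreover have "countable \<A>" unfolding \<A>_def by simp
  ultimately show ?thesis by blast
qed

lemma sigma_compact_if_countable_cofinal:
  assumes X: "Tychonoff_space X" and "countable \<A>"
    and cofinal: "cofinal_family (nbhds_pt (Ck X) zero_fun) (nbhds_pt (Cp X) zero_fun) \<A>"
  shows "sigma_compact_space X"
proof -
  have "\<A> \<subseteq> nbhds_pt (Ck X) zero_fun" using cofinal unfolding cofinal_family_def by blast
  from nbhds_pt_Ck_zero_basic_nbhds[OF this] obtain K d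
    where Kd: "\<forall>E\<in>\<A>. compactin X (K E) \<and> d E > 0 \<and> basic_nbhd X zero_fun (K E) (d E) \<subseteq> E"
    by blast
  have "topspace X \<subseteq> \<Union>(K ` \<A>)"
  proof
    fix y assume y: "y \<in> topspace X"
    then obtain E where "E \<in> \<A>" "E \<subseteq> basic_nbhd X zero_fun {y} 1"
      using cofinal basic_nbhd_in_nbhds_pt_Cp[of "{y}" X 1] unfolding cofinal_family_def by auto
    then have "y \<in> K E"
      using basic_nbhd_zero_subset_point_nbhd(1)[OF X _ y, of "K E" "d E" 1] Kd by blast
    then show "y \<in> \<Union>(K ` \<A>)" using \<open>E \<in> \<A>\<close> by blast
  qed
  moreover have "\<A> \<noteq> {}"
    using cofinal basic_nbhd_in_nbhds_pt_Cp[of "{}" X 1] unfolding cofinal_family_def by auto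
  ultimately have "\<Union>(range (K \<circ> from_nat_into \<A>)) = topspace X"
    using Kd compactin_subset_topspace range_from_nat_into[OF _ \<open>countable \<A>\<close>]
    by (metis (no_types, lifting) image_comp subset_antisym UN_least)
  then show ?thesis unfolding sigma_compact_space_def
    using Kd from_nat_into[OF \<open>\<A> \<noteq> {}\<close>] by (intro exI[of _ "K \<circ> from_nat_into \<A>"]) auto
qed

lemma no_finite_cofinal:
  assumes X: "Tychonoff_space X" "topspace X \<noteq> {}"
  shows "\<not> (\<exists>\<A>. finite \<A> \<and> cofinal_family (nbhds_pt (Ck X) zero_fun) (nbhds_pt (Cp X) zero_fun) \<A>)"
proof
  assume "\<exists>\<A>. finite \<A> \<and> cofinal_family (nbhds_pt (Ck X) zero_fun) (nbhds_pt (Cp X) zero_fun) \<A>"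
  then obtain \<A> where "finite \<A>"
    and cofinal: "cofinal_family (nbhds_pt (Ck X) zero_fun) (nbhds_pt (Cp X) zero_fun) \<A>"
    by blast
  have "\<A> \<subseteq> nbhds_pt (Ck X) zero_fun" using cofinal unfolding cofinal_family_def by blast
  from nbhds_pt_Ck_zero_basic_nbhds[OF this] obtain K d
    where Kd: "\<forall>E\<in>\<A>. compactin X (K E) \<and> d E > 0 \<and> basic_nbhd X zero_fun (K E) (d E) \<subseteq> E"
    by blast
  obtain p where p: "p \<in> topspace X" using X(2) by blast
  \<comment> \<open>Below every radius \<open>d E\<close>; the \<open>1\<close> keeps \<open>Min\<close> off the empty set.\<close>
  define \<delta> where "\<delta> = Min (insert 1 (d ` \<A>)) / 2"
  have "\<delta> > 0" unfolding \<delta>_def using \<open>finite \<A>\<close> Kd by auto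
  then obtain E where E: "E \<in> \<A>" "E \<subseteq> basic_nbhd X zero_fun {p} \<delta>"
    using cofinal basic_nbhd_in_nbhds_pt_Cp[of "{p}" X \<delta>] p unfolding cofinal_family_def by auto
  then have "d E \<le> \<delta>"
    using basic_nbhd_zero_subset_point_nbhd(2)[OF X(1) _ p, of "K E" "d E" \<delta>] Kd by blast
  moreover have "Min (insert 1 (d ` \<A>)) \<le> d E" using \<open>finite \<A>\<close> E(1) by simp
  ultimately show False using Kd E(1) unfolding \<delta>_def by fastforce
qed

lemma sigma_compact_iff_cof_is_omega:
  assumes "Tychonoff_space X" "topspace X \<noteq> {}"
  shows "sigma_compact_space X \<longleftrightarrow>
    cof_is_omega (nbhds_pt (Ck X) zero_fun) (nbhds_pt (Cp X) zero_fun)"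
  unfolding cof_is_omega_def
  using countable_cofinal_if_sigma_compact sigma_compact_if_countable_cofinal[OF assms(1)]
    no_finite_cofinal[OF assms] by blast

section \<open>Dual pairs, \<open>\<gamma>\<close>-covers and convergence\<close>

lemma downward_directed_nbhds_pt: "downward_directed (nbhds_pt Y y)"
proof
  fix S assume "finite S" "S \<subseteq> nbhds_pt Y y" "S \<noteq> {}"
  then have "\<Inter>S \<in> nbhds_pt Y y" by (auto simp: nbhds_pt_def intro: openin_Inter)
  then show "\<exists>M\<in>nbhds_pt Y y. \<forall>s\<in>S. M \<subseteq> s" by blast
qed

lemma dual_families_nbhds_pt_clustering:
  assumes "y \<in> topspace Y"
  shows "dual_families (nbhds_pt Y y) (clustering_sets Y y)"
proof
  fix S N assume "S \<in> clustering_sets Y y" "N \<in> nbhds_pt Y y"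
  then show "S \<inter> N \<noteq> {}" unfolding clustering_sets_def nbhds_pt_def in_closure_of by blast
next
  fix f assume f: "\<forall>N\<in>nbhds_pt Y y. f N \<in> N"
  then have "f ` nbhds_pt Y y \<subseteq> topspace Y" using openin_subset unfolding nbhds_pt_def by fastforce
  moreover have "y \<in> Y closure_of (f ` nbhds_pt Y y)"
    using assms f unfolding in_closure_of nbhds_pt_def by blast
  ultimately show "f ` nbhds_pt Y y \<in> clustering_sets Y y" unfolding clustering_sets_def by blast
qed

lemma dual_families_nonempty_opens_dense: "dual_families (nonempty_opens Y) (dense_sets Y)"
proof
  fix D N assume "D \<in> dense_sets Y" "N \<in> nonempty_opens Y"
  then show "D \<inter> N \<noteq> {}" unfolding dense_sets_def nonempty_opens_def dense_intersects_open by blast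
next
  fix f assume f: "\<forall>N\<in>nonempty_opens Y. f N \<in> N"
  then have "f ` nonempty_opens Y \<subseteq> topspace Y"
    using openin_subset unfolding nonempty_opens_def by fastforce
  moreover have "f ` nonempty_opens Y \<inter> T \<noteq> {}" if "openin Y T" "T \<noteq> {}" for T
    using f that unfolding nonempty_opens_def by blast
  ultimately show "f ` nonempty_opens Y \<in> dense_sets Y"
    unfolding dense_sets_def dense_intersects_open by blast
qed

lemma limitin_imp_in_closure_of_range:
  assumes "limitin Y x l sequentially"
  shows "l \<in> Y closure_of range x"
  unfolding in_closure_of
proof (intro conjI allI impI)
  show "l \<in> topspace Y" using assms by (simp add: limitin_def)
  fix T assume "l \<in> T \<and> openin Y T"
  then obtain N where "\<forall>n\<ge>N. x n \<in> T" using assms by (auto simp: limitin_sequentially)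
  then show "\<exists>y. y \<in> range x \<and> y \<in> T" by blast
qed

lemma game_equiv_One_gamma_omega:
  "game_equiv_One (G1_neg (nbhds_cpt X) (gamma_covers X)) (G1_neg (nbhds_cpt X) (omega_covers X))"
  unfolding G1_neg_def
proof (rule downward_directed.game_equiv_One_subsequence[OF downward_directed_nbhds_cpt])
  fix x :: "nat \<Rightarrow> 'a set"
  show "range x \<notin> omega_covers X \<Longrightarrow> range x \<notin> gamma_covers X"
    using gamma_covers_subset_omega_covers by blast
  assume "\<forall>n. x n \<in> \<Union>(nbhds_cpt X)" "range x \<notin> gamma_covers X"
  then show "\<exists>r :: nat \<Rightarrow> nat. strict_mono r \<and> range (x \<circ> r) \<notin> omega_covers X"
    using not_gamma_cover_subsequence_not_omega_cover[of X x] nbhds_cpt_member by blast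
qed

lemma game_equiv_One_convergence_clustering:
  "game_equiv_One
     ((nbhds_pt (Ck X) zero_fun, \<lambda>x. \<not> limitin (Cp X) x zero_fun sequentially) :: ('a \<Rightarrow> real) game)
     (G1_neg (nbhds_pt (Ck X) zero_fun) (clustering_sets (Cp X) zero_fun))"
  unfolding G1_neg_def
proof (rule downward_directed.game_equiv_One_subsequence[OF downward_directed_nbhds_pt])
  fix x :: "nat \<Rightarrow> 'a \<Rightarrow> real"
  assume x: "\<forall>n. x n \<in> \<Union>(nbhds_pt (Ck X) zero_fun)"
  show "range x \<notin> clustering_sets (Cp X) zero_fun \<Longrightarrow> \<not> limitin (Cp X) x zero_fun sequentially"
  proof (erule contrapos_nn)
    assume "limitin (Cp X) x zero_fun sequentially"
    moreover have "range x \<subseteq> topspace (Cp X)"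
      using x openin_subset unfolding nbhds_pt_def by fastforce
    ultimately show "range x \<in> clustering_sets (Cp X) zero_fun"
      unfolding clustering_sets_def by (auto intro: limitin_imp_in_closure_of_range)
  qed
next
  fix x :: "nat \<Rightarrow> 'a \<Rightarrow> real"
  assume "\<not> limitin (Cp X) x zero_fun sequentially"
  then obtain U where U: "openin (Cp X) U" "zero_fun \<in> U" "\<not> eventually (\<lambda>n. x n \<in> U) sequentially"
    unfolding limitin_def by auto
  then obtain r :: "nat \<Rightarrow> nat" where r: "strict_mono r" "\<forall>n. x (r n) \<notin> U"
    using not_eventually_sequentiallyD by blast
  then have "zero_fun \<notin> Cp X closure_of range (x \<circ> r)"
    using U(1,2) unfolding in_closure_of by auto
  then show "\<exists>r :: nat \<Rightarrow> nat. strict_mono r \<and> range (x \<circ> r) \<notin> clustering_sets (Cp X) zero_fun"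
    using r(1) unfolding clustering_sets_def by blast
qed

theorem mainTheorem2:
  fixes X :: "'a topology"
  assumes "Tychonoff_space X" and "topspace X \<noteq> {}"
  defines "A1 \<equiv> G1_neg (nbhds_cpt X) (omega_covers X)"
      and "A2 \<equiv> G1_neg (nbhds_pt (Ck X) zero_fun) (clustering_sets (Cp X) zero_fun)"
      and "A3 \<equiv> G1 (nonempty_opens (Ck X)) (closed_discrete_sets (Cp X))"
      and "B1 \<equiv> G1 (k_covers X) (omega_covers X)"
      and "B2 \<equiv> G1 (clustering_sets (Ck X) zero_fun) (clustering_sets (Cp X) zero_fun)"
      and "B3 \<equiv> G1 (dense_sets (Ck X)) (clustering_sets (Cp X) zero_fun)"
      and "C1 \<equiv> G1_neg (nbhds_cpt X) (gamma_covers X)"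
      and "C2 \<equiv> ((nbhds_pt (Ck X) zero_fun,
                  \<lambda>x. \<not> limitin (Cp X) x zero_fun sequentially) :: ('a \<Rightarrow> real) game)"
      and "D \<equiv> G1 (k_covers X) (gamma_covers X)"
  shows
    "(game_equiv A1 A2 \<and> game_equiv A2 A3 \<and> game_equiv A1 A3)
   \<and> (game_equiv B1 B2 \<and> game_equiv B2 B3 \<and> game_equiv B1 B3)
   \<and> (game_dual A1 B1 \<and> game_dual A1 B2 \<and> game_dual A1 B3 \<and>
      game_dual A2 B1 \<and> game_dual A2 B2 \<and> game_dual A2 B3 \<and>
      game_dual A3 B1 \<and> game_dual A3 B2 \<and> game_dual A3 B3)
   \<and> ((I_pre_wins A3 \<longleftrightarrow> sigma_compact_space X) \<and>
      (sigma_compact_space X \<longleftrightarrow>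
         cof_is_omega (nbhds_pt (Ck X) zero_fun) (nbhds_pt (Cp X) zero_fun)))
   \<and> (game_equiv_One C1 A1 \<and> game_equiv_One C1 A2 \<and>
      game_equiv_One C2 A1 \<and> game_equiv_One C2 A2)
   \<and> game_equiv_Two B1 D"
proof -
  define A3' where "A3' = G1_neg (nonempty_opens (Ck X)) (clustering_sets (Cp X) zero_fun)"
  have A: "game_equiv A1 A2" "game_equiv A1 A3" "game_equiv A1 A3'"
    unfolding A1_def A2_def A3_def A3'_def by (rule game_equiv_nbhds_cpt_Ck_games[OF assms(1,2)])+
  have dual: "game_dual A1 B1" "game_dual A2 B2" "game_dual A3' B3" "game_dual C1 D"
    unfolding A1_def B1_def A2_def B2_def A3'_def B3_def C1_def D_def
    by (intro dual_families.game_dual dual_families_nbhds_cpt_k_covers[OF assms(2)]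
        dual_families_nbhds_pt_clustering dual_families_nonempty_opens_dense; simp)+
  have B: "game_equiv B1 B2" "game_equiv B1 B3"
    using game_le_II_dual dual A unfolding game_equiv_def by meson+
  have One: "game_equiv_One C1 A1" "game_equiv_One C2 A2"
    unfolding C1_def A1_def C2_def A2_def
    by (rule game_equiv_One_gamma_omega game_equiv_One_convergence_clustering)+
  have "I_pre_wins A3 \<longleftrightarrow> sigma_compact_space X"
    using I_pre_wins_nbhds_cpt_iff_sigma_compact[OF assms(1,2)]
      game_equiv_imp_game_equiv_One[OF A(2)]
    unfolding A1_def game_equiv_One_def by blast
  moreover have "game_dual A1 B1 \<and> game_dual A1 B2 \<and> game_dual A1 B3 \<and>
      game_dual A2 B1 \<and> game_dual A2 B2 \<and> game_dual A2 B3 \<and>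
      game_dual A3 B1 \<and> game_dual A3 B2 \<and> game_dual A3 B3"
    by (intro conjI game_dual_equiv[OF dual(1)] A B game_equiv_refl)
  moreover have "game_equiv_One C1 A2" "game_equiv_One C2 A1"
    using One game_equiv_imp_game_equiv_One[OF A(1)] unfolding game_equiv_One_def by blast+
  moreover have "game_equiv_Two B1 D"
    by (rule game_equiv_Two_dual[OF dual(1) dual(4) One(1)])
  ultimately show ?thesis
    using A B One sigma_compact_iff_cof_is_omega[OF assms(1,2)] game_equiv_sym game_equiv_trans
    by meson
qed

end
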